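(* Let $(\mathfrak C:A)$, $(\mathfrak D:B)$ be corings. Let $(\Sigma,\mathfrak s)$ and $(\widetilde\Sigma,\widetilde{\mathfrak s})$ be pairs, each consisting of a $(B,A)$-bimodule and a $(B,A)$-bilinear map $\mathfrak D\otimes_B\Sigma\to\Sigma\otimes_A\mathfrak C$ (resp. $\mathfrak D\otimes_B\widetilde\Sigma\to\widetilde\Sigma\otimes_A\mathfrak C$) satisfying $(\Sigma\otimes_A\varepsilon_{\mathfrak C})\circ\mathfrak s=\varepsilon_{\mathfrak D}\otimes_B\Sigma$ and $(\Sigma\otimes_A\Delta_{\mathfrak C})\circ\mathfrak s=(\mathfrak s\otimes_A\mathfrak C)\circ(\mathfrak D\otimes_B\mathfrak s)\circ(\Delta_{\mathfrak D}\otimes_B\Sigma)$ (and likewise for $\widetilde{\mathfrak s}$). Call a $2$-cell from $(\Sigma,\mathfrak s)$ to $(\widetilde\Sigma,\widetilde{\mathfrak s})$ a $(B,A)$-bilinear map $\mathfrak a:\mathfrak D\otimes_B\Sigma\to\widetilde\Sigma$ such that $(\mathfrak a\otimes_A\mathfrak C)\circ(\mathfrak D\otimes_B\mathfrak s)\circ(\Delta_{\mathfrak D}\otimes_B\Sigma)=\widetilde{\mathfrak s}\circ(\mathfrak D\otimes_B\mathfrak a)\circ(\Delta_{\mathfrak D}\otimes_B\Sigma)$. Regard $\mathfrak D\otimes_B\Sigma$ as a $(\mathfrak D,\mathfrak C)$-bicomodule with left coaction $\Delta_{\mathfrak D}\otimes_B\Sigma$ and right coaction $(\mathfrak D\otimes_B\mathfrak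 s)\circ(\Delta_{\mathfrak D}\otimes_B\Sigma)$, and similarly $\mathfrak D\otimes_B\widetilde\Sigma$. Then $\mathfrak a\mapsto(\mathfrak D\otimes_B\mathfrak a)\circ(\Delta_{\mathfrak D}\otimes_B\Sigma)$ is a bijection from the set of $2$-cells $(\Sigma,\mathfrak s)\to(\widetilde\Sigma,\widetilde{\mathfrak s})$ onto the set $\mathrm{Hom}^{\mathfrak D,\mathfrak C}(\mathfrak D\otimes_B\Sigma,\mathfrak D\otimes_B\widetilde\Sigma)$ of $(\mathfrak D,\mathfrak C)$-bicolinear maps, with inverse $f\mapsto(\varepsilon_{\mathfrak D}\otimes_B\widetilde\Sigma)\circ f$.
   Context: $k$ is a commutative ring; all algebras are unital associative $k$-algebras. An $A$-coring $(\mathfrak C:A)$ is an $A$-bimodule $\mathfrak C$ with coassociative comultiplication $\Delta_{\mathfrak C}:\mathfrak C\to\mathfrak C\otimes_A\mathfrak C$ and counit $\varepsilon_{\mathfrak C}:\mathfrak C\to A$, both $A$-bimodule maps. A $(\mathfrak D,\mathfrak C)$-bicomodule is a $(B,A)$-bimodule with a left $\mathfrak D$-comodule and right $\mathfrak C$-comodule structure whose coactions commute; bicolinear maps are maps colinear for both coactions. Identifications $B\otimes_B\Sigma\cong\Sigma\cong\Sigma\otimes_AA$ are used tacitly. *)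

theory Defs
  imports "HOL-Library.FuncSet"
begin

record ('b, 'm, 'a) bimod =
  bm_car :: "'m set"
  bm_zero :: 'm
  bm_plus :: "'m \<Rightarrow> 'm \<Rightarrow> 'm"
  bm_neg :: "'m \<Rightarrow> 'm"
  bm_lact :: "'b \<Rightarrow> 'm \<Rightarrow> 'm"
  bm_ract :: "'m \<Rightarrow> 'a \<Rightarrow> 'm"

definition bimodule :: "('b::ring_1, 'm, 'a::ring_1) bimod \<Rightarrow> bool" where
  "bimodule M \<longleftrightarrow>
     bm_zero M \<in> bm_car M
   \<and> (\<forall>x\<in>bm_car M. \<forall>y\<in>bm_car M. bm_plus M x y \<in> bm_car M)
   \<and> (\<forall>x\<in>bm_car M. bm_neg M x \<in> bm_car M)
   \<and> (\<forall>b. \<forall>x\<in>bm_car M. bm_lact M b x \<in> bm_car M)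
   \<and> (\<forall>a. \<forall>x\<in>bm_car M. bm_ract M x a \<in> bm_car M)
   \<and> (\<forall>x\<in>bm_car M. \<forall>y\<in>bm_car M. \<forall>z\<in>bm_car M.
        bm_plus M (bm_plus M x y) z = bm_plus M x (bm_plus M y z))
   \<and> (\<forall>x\<in>bm_car M. \<forall>y\<in>bm_car M. bm_plus M x y = bm_plus M y x)
   \<and> (\<forall>x\<in>bm_car M. bm_plus M (bm_zero M) x = x)
   \<and> (\<forall>x\<in>bm_car M. bm_plus M (bm_neg M x) x = bm_zero M)
   \<and> (\<forall>x\<in>bm_car M. bm_lact M 1 x = x)
   \<and> (\<forall>b b'. \<forall>x\<in>bm_car M. bm_lact M (b * b') x = bm_lact M b (bm_lact M b' x))
   \<and> (\<forall>b b'. \<forall>x\<in>bm_car M. bm_lact M (b + b') x = bm_plus M (bm_lact M b x) (bm_lact M b' x))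
   \<and> (\<forall>b. \<forall>x\<in>bm_car M. \<forall>y\<in>bm_car M.
        bm_lact M b (bm_plus M x y) = bm_plus M (bm_lact M b x) (bm_lact M b y))
   \<and> (\<forall>x\<in>bm_car M. bm_ract M x 1 = x)
   \<and> (\<forall>a a'. \<forall>x\<in>bm_car M. bm_ract M x (a * a') = bm_ract M (bm_ract M x a) a')
   \<and> (\<forall>a a'. \<forall>x\<in>bm_car M. bm_ract M x (a + a') = bm_plus M (bm_ract M x a) (bm_ract M x a'))
   \<and> (\<forall>a. \<forall>x\<in>bm_car M. \<forall>y\<in>bm_car M.
        bm_ract M (bm_plus M x y) a = bm_plus M (bm_ract M x a) (bm_ract M y a))
   \<and> (\<forall>a b. \<forall>x\<in>bm_car M. bm_ract M (bm_lact M b x) a = bm_lact M b (bm_ract M x a))"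

definition kalgebra :: "('k::comm_ring_1 \<Rightarrow> 'a::ring_1) \<Rightarrow> bool" where
  "kalgebra \<iota> \<longleftrightarrow> \<iota> 1 = 1 \<and> (\<forall>x y. \<iota> (x + y) = \<iota> x + \<iota> y)
     \<and> (\<forall>x y. \<iota> (x * y) = \<iota> x * \<iota> y) \<and> (\<forall>x a. \<iota> x * a = a * \<iota> x)"

definition kbimod :: "('k::comm_ring_1 \<Rightarrow> 'b::ring_1) \<Rightarrow> ('k \<Rightarrow> 'a::ring_1)
    \<Rightarrow> ('b, 'm, 'a) bimod \<Rightarrow> bool" where
  "kbimod \<iota>B \<iota>A M \<longleftrightarrow> bimodule M \<and>
     (\<forall>l. \<forall>x\<in>bm_car M. bm_lact M (\<iota>B l) x = bm_ract M x (\<iota>A l))"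

definition bimod_hom :: "('b, 'm, 'a) bimod \<Rightarrow> ('b, 'n, 'a) bimod \<Rightarrow> ('m \<Rightarrow> 'n) \<Rightarrow> bool" where
  "bimod_hom M N f \<longleftrightarrow>
     (\<forall>x\<in>bm_car M. f x \<in> bm_car N)
   \<and> (\<forall>x\<in>bm_car M. \<forall>y\<in>bm_car M. f (bm_plus M x y) = bm_plus N (f x) (f y))
   \<and> (\<forall>b. \<forall>x\<in>bm_car M. f (bm_lact M b x) = bm_lact N b (f x))
   \<and> (\<forall>a. \<forall>x\<in>bm_car M. f (bm_ract M x a) = bm_ract N (f x) a)"

definition ringmod :: "('a::ring_1, 'a, 'a) bimod" where
  "ringmod = \<lparr>bm_car = UNIV, bm_zero = 0, bm_plus = (+), bm_neg = uminus,
              bm_lact = (*), bm_ract = (*)\<rparr>"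

section \<open>Tensor products over a ring\<close>

text \<open>M \<otimes>_A N is the quotient of the free abelian group on (carrier M) \<times> (carrier N),
represented by finitely supported integer-valued functions, by the subgroup generated by
biadditivity and A-balancedness relations. Elements are equivalence classes.\<close>

type_synonym ('m, 'n) tns = "('m \<times> 'n \<Rightarrow> int) set"

definition fsums :: "('x, 'm, 'a) bimod \<Rightarrow> ('a, 'n, 'y) bimod \<Rightarrow> ('m \<times> 'n \<Rightarrow> int) set" where
  "fsums M N = {x. finite {p. x p \<noteq> 0} \<and> {p. x p \<noteq> 0} \<subseteq> bm_car M \<times> bm_car N}"

definition delta :: "'p \<Rightarrow> 'p \<Rightarrow> int" where
  "delta p = (\<lambda>q. if q = p then 1 else 0)"

inductive_set trel :: "('x, 'm, 'a) bimod \<Rightarrow> ('a, 'n, 'y) bimod \<Rightarrow> ('m \<times> 'n \<Rightarrow> int) set"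
  for M N where
  zero: "(\<lambda>_. 0) \<in> trel M N"
| addl: "\<lbrakk>m \<in> bm_car M; m' \<in> bm_car M; n \<in> bm_car N\<rbrakk> \<Longrightarrow>
     (\<lambda>q. delta (bm_plus M m m', n) q - delta (m, n) q - delta (m', n) q) \<in> trel M N"
| addr: "\<lbrakk>m \<in> bm_car M; n \<in> bm_car N; n' \<in> bm_car N\<rbrakk> \<Longrightarrow>
     (\<lambda>q. delta (m, bm_plus N n n') q - delta (m, n) q - delta (m, n') q) \<in> trel M N"
| bal: "\<lbrakk>m \<in> bm_car M; n \<in> bm_car N\<rbrakk> \<Longrightarrow>
     (\<lambda>q. delta (bm_ract M m a, n) q - delta (m, bm_lact N a n) q) \<in> trel M N"
| plus: "\<lbrakk>x \<in> trel M N; y \<in> trel M N\<rbrakk> \<Longrightarrow> (\<lambda>q. x q + y q) \<in> trel M N"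
| neg: "x \<in> trel M N \<Longrightarrow> (\<lambda>q. - x q) \<in> trel M N"

definition tcls :: "('x, 'm, 'a) bimod \<Rightarrow> ('a, 'n, 'y) bimod \<Rightarrow> ('m \<times> 'n \<Rightarrow> int) \<Rightarrow> ('m, 'n) tns" where
  "tcls M N x = {y \<in> fsums M N. (\<lambda>q. x q - y q) \<in> trel M N}"

definition rep :: "('p \<Rightarrow> int) set \<Rightarrow> 'p \<Rightarrow> int" where
  "rep t = (SOME x. x \<in> t)"

definition msum :: "('u, 'p, 'v) bimod \<Rightarrow> ('q \<Rightarrow> 'p) \<Rightarrow> 'q set \<Rightarrow> 'p" where
  "msum P f S = Finite_Set.fold (\<lambda>q acc. bm_plus P (f q) acc) (bm_zero P) S"

definition zmul :: "('u, 'p, 'v) bimod \<Rightarrow> int \<Rightarrow> 'p \<Rightarrow> 'p" where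
  "zmul P n x = (if 0 \<le> n then (bm_plus P x ^^ nat n) (bm_zero P)
                 else bm_neg P ((bm_plus P x ^^ nat (- n)) (bm_zero P)))"

text \<open>The additive map M \<otimes> N \<rightarrow> P induced by a (balanced, biadditive) function on M \<times> N.\<close>

definition lift :: "('u, 'p, 'v) bimod \<Rightarrow> ('m \<times> 'n \<Rightarrow> 'p) \<Rightarrow> ('m, 'n) tns \<Rightarrow> 'p" where
  "lift P \<phi> t = msum P (\<lambda>q. zmul P (rep t q) (\<phi> q)) {q. rep t q \<noteq> 0}"

definition tgrp :: "('x, 'm, 'a) bimod \<Rightarrow> ('a, 'n, 'y) bimod \<Rightarrow> ('u, ('m, 'n) tns, 'v) bimod" where
  "tgrp M N = \<lparr>bm_car = tcls M N ` fsums M N,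
               bm_zero = tcls M N (\<lambda>_. 0),
               bm_plus = (\<lambda>t u. tcls M N (\<lambda>q. rep t q + rep u q)),
               bm_neg = (\<lambda>t. tcls M N (\<lambda>q. - rep t q)),
               bm_lact = (\<lambda>_ _. undefined),
               bm_ract = (\<lambda>_ _. undefined)\<rparr>"

definition tel :: "('x, 'm, 'a) bimod \<Rightarrow> ('a, 'n, 'y) bimod \<Rightarrow> 'm \<Rightarrow> 'n \<Rightarrow> ('m, 'n) tns" where
  "tel M N m n = tcls M N (delta (m, n))"

definition tens :: "('x, 'm, 'a) bimod \<Rightarrow> ('a, 'n, 'y) bimod \<Rightarrow> ('x, ('m, 'n) tns, 'y) bimod" where
  "tens M N = \<lparr>bm_car = tcls M N ` fsums M N,
               bm_zero = tcls M N (\<lambda>_. 0),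
               bm_plus = (\<lambda>t u. tcls M N (\<lambda>q. rep t q + rep u q)),
               bm_neg = (\<lambda>t. tcls M N (\<lambda>q. - rep t q)),
               bm_lact = (\<lambda>b t. lift (tgrp M N :: (unit, _, unit) bimod)
                              (\<lambda>(m, n). tel M N (bm_lact M b m) n) t),
               bm_ract = (\<lambda>t a. lift (tgrp M N :: (unit, _, unit) bimod)
                              (\<lambda>(m, n). tel M N m (bm_ract N n a)) t)\<rparr>"

definition tmap :: "('x, 'm', 'a) bimod \<Rightarrow> ('a, 'n', 'y) bimod \<Rightarrow> ('m \<Rightarrow> 'm') \<Rightarrow> ('n \<Rightarrow> 'n')
    \<Rightarrow> ('m, 'n) tns \<Rightarrow> ('m', 'n') tns" where
  "tmap M' N' f g t = lift (tens M' N') (\<lambda>(m, n). tel M' N' (f m) (g n)) t"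

definition assocR :: "('x, 'm, 'a) bimod \<Rightarrow> ('a, 'n, 'b) bimod \<Rightarrow> ('b, 'p, 'y) bimod
    \<Rightarrow> (('m, 'n) tns, 'p) tns \<Rightarrow> ('m, ('n, 'p) tns) tns" where
  "assocR M N P t = lift (tens M (tens N P))
     (\<lambda>(u, p). lift (tens M (tens N P)) (\<lambda>(m, n). tel M (tens N P) m (tel N P n p)) u) t"

definition assocL :: "('x, 'm, 'a) bimod \<Rightarrow> ('a, 'n, 'b) bimod \<Rightarrow> ('b, 'p, 'y) bimod
    \<Rightarrow> ('m, ('n, 'p) tns) tns \<Rightarrow> (('m, 'n) tns, 'p) tns" where
  "assocL M N P t = lift (tens (tens M N) P)
     (\<lambda>(m, v). lift (tens (tens M N) P) (\<lambda>(n, p). tel (tens M N) P (tel M N m n) p) v) t"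

text \<open>For e : X \<rightarrow> B, the composite X \<otimes>_B M \<rightarrow> B \<otimes>_B M \<cong> M, and similarly on the right
(these are the tacit identifications B \<otimes>_B M \<cong> M \<cong> M \<otimes>_A A).\<close>

definition lact_by :: "('b, 'm, 'a) bimod \<Rightarrow> ('x \<Rightarrow> 'b) \<Rightarrow> ('x, 'm) tns \<Rightarrow> 'm" where
  "lact_by M e t = lift M (\<lambda>(x, m). bm_lact M (e x) m) t"

definition ract_by :: "('b, 'm, 'a) bimod \<Rightarrow> ('x \<Rightarrow> 'a) \<Rightarrow> ('m, 'x) tns \<Rightarrow> 'm" where
  "ract_by M e t = lift M (\<lambda>(m, x). bm_ract M m (e x)) t"

definition coring :: "('k::comm_ring_1 \<Rightarrow> 'a::ring_1) \<Rightarrow> ('a, 'c, 'a) bimod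
    \<Rightarrow> ('c \<Rightarrow> ('c, 'c) tns) \<Rightarrow> ('c \<Rightarrow> 'a) \<Rightarrow> bool" where
  "coring \<iota> C \<Delta> \<epsilon> \<longleftrightarrow> kbimod \<iota> \<iota> C
     \<and> bimod_hom C (tens C C) \<Delta>
     \<and> bimod_hom C ringmod \<epsilon>
     \<and> (\<forall>c\<in>bm_car C. tmap C (tens C C) id \<Delta> (\<Delta> c)
                      = assocR C C C (tmap (tens C C) C \<Delta> id (\<Delta> c)))
     \<and> (\<forall>c\<in>bm_car C. lact_by C \<epsilon> (\<Delta> c) = c)
     \<and> (\<forall>c\<in>bm_car C. ract_by C \<epsilon> (\<Delta> c) = c)"

definition coactL :: "('b, 'd, 'b) bimod \<Rightarrow> ('d \<Rightarrow> ('d, 'd) tns) \<Rightarrow> ('b, 's, 'a) bimod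
    \<Rightarrow> ('d, 's) tns \<Rightarrow> ('d, ('d, 's) tns) tns" where
  "coactL D \<Delta>D S x = assocR D D S (tmap (tens D D) S \<Delta>D id x)"

definition coactR :: "('b, 'd, 'b) bimod \<Rightarrow> ('d \<Rightarrow> ('d, 'd) tns) \<Rightarrow> ('b, 's, 'a) bimod
    \<Rightarrow> ('a, 'c, 'a) bimod \<Rightarrow> (('d, 's) tns \<Rightarrow> ('s, 'c) tns)
    \<Rightarrow> ('d, 's) tns \<Rightarrow> (('d, 's) tns, 'c) tns" where
  "coactR D \<Delta>D S C s x = assocL D S C (tmap D (tens S C) id s (coactL D \<Delta>D S x))"

definition onecell :: "('b, 'd, 'b) bimod \<Rightarrow> ('d \<Rightarrow> ('d, 'd) tns) \<Rightarrow> ('d \<Rightarrow> 'b)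
    \<Rightarrow> ('a, 'c, 'a) bimod \<Rightarrow> ('c \<Rightarrow> ('c, 'c) tns) \<Rightarrow> ('c \<Rightarrow> 'a)
    \<Rightarrow> ('b, 's, 'a) bimod \<Rightarrow> (('d, 's) tns \<Rightarrow> ('s, 'c) tns) \<Rightarrow> bool" where
  "onecell D \<Delta>D \<epsilon>D C \<Delta>C \<epsilon>C S s \<longleftrightarrow>
     bimod_hom (tens D S) (tens S C) s
   \<and> (\<forall>x\<in>bm_car (tens D S). ract_by S \<epsilon>C (s x) = lact_by S \<epsilon>D x)
   \<and> (\<forall>x\<in>bm_car (tens D S). tmap S (tens C C) id \<Delta>C (s x)
        = assocR S C C (tmap (tens S C) C s id (coactR D \<Delta>D S C s x)))"

definition twocells :: "('b, 'd, 'b) bimod \<Rightarrow> ('d \<Rightarrow> ('d, 'd) tns) \<Rightarrow> ('a, 'c, 'a) bimod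
    \<Rightarrow> ('b, 's, 'a) bimod \<Rightarrow> (('d, 's) tns \<Rightarrow> ('s, 'c) tns)
    \<Rightarrow> ('b, 't, 'a) bimod \<Rightarrow> (('d, 't) tns \<Rightarrow> ('t, 'c) tns)
    \<Rightarrow> (('d, 's) tns \<Rightarrow> 't) set" where
  "twocells D \<Delta>D C S s T t = {a. a \<in> extensional (bm_car (tens D S))
     \<and> bimod_hom (tens D S) T a
     \<and> (\<forall>x\<in>bm_car (tens D S).
          tmap T C a id (coactR D \<Delta>D S C s x) = t (tmap D T id a (coactL D \<Delta>D S x)))}"

definition bicolin :: "('b, 'd, 'b) bimod \<Rightarrow> ('d \<Rightarrow> ('d, 'd) tns) \<Rightarrow> ('a, 'c, 'a) bimod
    \<Rightarrow> ('b, 's, 'a) bimod \<Rightarrow> (('d, 's) tns \<Rightarrow> ('s, 'c) tns)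
    \<Rightarrow> ('b, 't, 'a) bimod \<Rightarrow> (('d, 't) tns \<Rightarrow> ('t, 'c) tns)
    \<Rightarrow> (('d, 's) tns \<Rightarrow> ('d, 't) tns) set" where
  "bicolin D \<Delta>D C S s T t = {f. f \<in> extensional (bm_car (tens D S))
     \<and> bimod_hom (tens D S) (tens D T) f
     \<and> (\<forall>x\<in>bm_car (tens D S). coactL D \<Delta>D T (f x) = tmap D (tens D T) id f (coactL D \<Delta>D S x))
     \<and> (\<forall>x\<in>bm_car (tens D S). coactR D \<Delta>D T C t (f x) = tmap (tens D T) C f id (coactR D \<Delta>D S C s x))}"

definition cellPhi :: "('b, 'd, 'b) bimod \<Rightarrow> ('d \<Rightarrow> ('d, 'd) tns) \<Rightarrow> ('b, 's, 'a) bimod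
    \<Rightarrow> ('b, 't, 'a) bimod \<Rightarrow> (('d, 's) tns \<Rightarrow> 't) \<Rightarrow> ('d, 's) tns \<Rightarrow> ('d, 't) tns" where
  "cellPhi D \<Delta>D S T a = restrict (\<lambda>x. tmap D T id a (coactL D \<Delta>D S x)) (bm_car (tens D S))"

definition cellPsi :: "('b, 'd, 'b) bimod \<Rightarrow> ('d \<Rightarrow> 'b) \<Rightarrow> ('b, 's, 'a) bimod
    \<Rightarrow> ('b, 't, 'a) bimod \<Rightarrow> (('d, 's) tns \<Rightarrow> ('d, 't) tns) \<Rightarrow> ('d, 's) tns \<Rightarrow> 't" where
  "cellPsi D \<epsilon>D S T f = restrict (\<lambda>x. lact_by T \<epsilon>D (f x)) (bm_car (tens D S))"

end

theory Submission
  imports Defs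
begin

text \<open>
  The tensor product \<open>M \<otimes>\<^sub>A N\<close> is built as the quotient of finitely supported formal sums
  by the biadditivity and balancing relations, so every balanced map lifts to it, and two additive
  maps out of it agree as soon as they agree on elementary tensors. All identities between the
  structure maps below are checked on elementary tensors in this way.

  For a 2-cell \<open>a\<close>, the map \<open>\<Phi>(a) = (D \<otimes> a) \<circ> (\<Delta> \<otimes> \<Sigma>)\<close> is left colinear by coassociativity
  of \<open>\<Delta>\<close>, and right colinear because, after expanding the right coaction, the 2-cell condition
  turns one side into the other. Conversely \<open>\<Psi>(f) = (\<epsilon> \<otimes> \<Sigma>~) \<circ> f\<close> is a 2-cell by right
  colinearity of \<open>f\<close> and the counit law \<open>(\<epsilon> \<otimes> \<Sigma>~ \<otimes> C) \<circ> \<rho> = t\<close>. Finally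
  \<open>\<Psi>(\<Phi>(a)) = a\<close> is the left counit law, and \<open>\<Phi>(\<Psi>(f)) = f\<close> follows from left colinearity of
  \<open>f\<close> and the right counit law.
\<close>

definition abgroup :: "('u, 'p, 'v) bimod \<Rightarrow> bool" where
  "abgroup P \<longleftrightarrow> bm_zero P \<in> bm_car P
   \<and> (\<forall>x\<in>bm_car P. \<forall>y\<in>bm_car P. bm_plus P x y \<in> bm_car P)
   \<and> (\<forall>x\<in>bm_car P. bm_neg P x \<in> bm_car P)
   \<and> (\<forall>x\<in>bm_car P. \<forall>y\<in>bm_car P. \<forall>z\<in>bm_car P.
        bm_plus P (bm_plus P x y) z = bm_plus P x (bm_plus P y z))
   \<and> (\<forall>x\<in>bm_car P. \<forall>y\<in>bm_car P. bm_plus P x y = bm_plus P y x)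
   \<and> (\<forall>x\<in>bm_car P. bm_plus P (bm_zero P) x = x)
   \<and> (\<forall>x\<in>bm_car P. bm_plus P (bm_neg P x) x = bm_zero P)"

lemma bimodule_abgroup: "bimodule M \<Longrightarrow> abgroup M"
  unfolding bimodule_def abgroup_def by (elim conjE) (intro conjI; assumption)

context
  fixes P :: "('u, 'p, 'v) bimod"
  assumes G: "abgroup P"
begin

lemma ag_zero_closed [simp]: "bm_zero P \<in> bm_car P"
  and ag_add_closed [simp]: "x \<in> bm_car P \<Longrightarrow> y \<in> bm_car P \<Longrightarrow> bm_plus P x y \<in> bm_car P"
  and ag_neg_closed [simp]: "x \<in> bm_car P \<Longrightarrow> bm_neg P x \<in> bm_car P"
  and ag_add_assoc: "x \<in> bm_car P \<Longrightarrow> y \<in> bm_car P \<Longrightarrow> z \<in> bm_car P \<Longrightarrow>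
    bm_plus P (bm_plus P x y) z = bm_plus P x (bm_plus P y z)"
  and ag_add_comm: "x \<in> bm_car P \<Longrightarrow> y \<in> bm_car P \<Longrightarrow> bm_plus P x y = bm_plus P y x"
  and ag_l_zero [simp]: "x \<in> bm_car P \<Longrightarrow> bm_plus P (bm_zero P) x = x"
  and ag_l_neg [simp]: "x \<in> bm_car P \<Longrightarrow> bm_plus P (bm_neg P x) x = bm_zero P"
  using G unfolding abgroup_def by blast+

lemma ag_r_zero [simp]: "x \<in> bm_car P \<Longrightarrow> bm_plus P x (bm_zero P) = x"
  by (metis ag_add_comm ag_l_zero ag_zero_closed)

lemma ag_r_neg [simp]: "x \<in> bm_car P \<Longrightarrow> bm_plus P x (bm_neg P x) = bm_zero P"
  by (metis ag_add_comm ag_l_neg ag_neg_closed)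

lemma ag_add_left_comm: "x \<in> bm_car P \<Longrightarrow> y \<in> bm_car P \<Longrightarrow> z \<in> bm_car P \<Longrightarrow>
   bm_plus P x (bm_plus P y z) = bm_plus P y (bm_plus P x z)"
  by (metis ag_add_assoc ag_add_comm)

lemma ag_add_exchange: "a \<in> bm_car P \<Longrightarrow> b \<in> bm_car P \<Longrightarrow> c \<in> bm_car P \<Longrightarrow> d \<in> bm_car P \<Longrightarrow>
  bm_plus P (bm_plus P a b) (bm_plus P c d) = bm_plus P (bm_plus P a c) (bm_plus P b d)"
  by (simp add: ag_add_assoc ag_add_left_comm[of b c d])

lemma ag_add_minus_cancel [simp]:
  "x \<in> bm_car P \<Longrightarrow> w \<in> bm_car P \<Longrightarrow> bm_plus P x (bm_plus P (bm_neg P x) w) = w"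
  and ag_minus_add_cancel [simp]:
  "x \<in> bm_car P \<Longrightarrow> w \<in> bm_car P \<Longrightarrow> bm_plus P (bm_neg P x) (bm_plus P x w) = w"
  by (simp_all add: ag_add_assoc[symmetric])

lemma ag_add_left_cancel:
  assumes "x \<in> bm_car P" "y \<in> bm_car P" "z \<in> bm_car P" "bm_plus P x y = bm_plus P x z"
  shows "y = z"
  by (metis ag_minus_add_cancel assms)

lemma ag_neg_unique:
  assumes "a \<in> bm_car P" "b \<in> bm_car P" "bm_plus P a b = bm_zero P"
  shows "a = bm_neg P b"
  using ag_add_left_cancel[of b a "bm_neg P b"] assms by (simp add: ag_add_comm)

lemma ag_idem_eq_zero: "x \<in> bm_car P \<Longrightarrow> bm_plus P x x = x \<Longrightarrow> x = bm_zero P"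
  using ag_add_left_cancel[of x x "bm_zero P"] by simp

lemma ag_eq_if_diff_eq_zero:
  "a \<in> bm_car P \<Longrightarrow> b \<in> bm_car P \<Longrightarrow> bm_plus P a (bm_neg P b) = bm_zero P \<Longrightarrow> a = b"
  by (metis ag_neg_closed ag_neg_unique ag_add_comm ag_l_neg ag_add_left_cancel)

lemma ag_neg_zero [simp]: "bm_neg P (bm_zero P) = bm_zero P"
  by (metis ag_l_neg ag_neg_closed ag_zero_closed ag_r_zero)

lemma ag_neg_add: "x \<in> bm_car P \<Longrightarrow> y \<in> bm_car P \<Longrightarrow>
   bm_neg P (bm_plus P x y) = bm_plus P (bm_neg P x) (bm_neg P y)"
  by (rule ag_neg_unique[symmetric]) (simp_all add: ag_add_exchange)

end

definition additive :: "('u, 'm, 'v) bimod \<Rightarrow> ('u2, 'n, 'v2) bimod \<Rightarrow> ('m \<Rightarrow> 'n) \<Rightarrow> bool" where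
  "additive M N f \<longleftrightarrow> (\<forall>x\<in>bm_car M. f x \<in> bm_car N)
     \<and> (\<forall>x\<in>bm_car M. \<forall>y\<in>bm_car M. f (bm_plus M x y) = bm_plus N (f x) (f y))"

definition left_linear :: "('b, 'm, 'v) bimod \<Rightarrow> ('b, 'n, 'v2) bimod \<Rightarrow> ('m \<Rightarrow> 'n) \<Rightarrow> bool" where
  "left_linear M N f \<longleftrightarrow> (\<forall>b. \<forall>x\<in>bm_car M. f (bm_lact M b x) = bm_lact N b (f x))"

definition right_linear :: "('u, 'm, 'a) bimod \<Rightarrow> ('u2, 'n, 'a) bimod \<Rightarrow> ('m \<Rightarrow> 'n) \<Rightarrow> bool" where
  "right_linear M N f \<longleftrightarrow> (\<forall>a. \<forall>x\<in>bm_car M. f (bm_ract M x a) = bm_ract N (f x) a)"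

lemma additive_closed: "additive M N f \<Longrightarrow> x \<in> bm_car M \<Longrightarrow> f x \<in> bm_car N"
  and additive_add: "additive M N f \<Longrightarrow> x \<in> bm_car M \<Longrightarrow> y \<in> bm_car M \<Longrightarrow>
    f (bm_plus M x y) = bm_plus N (f x) (f y)"
  unfolding additive_def by blast+

lemma additiveI:
  "(\<And>x. x \<in> bm_car M \<Longrightarrow> f x \<in> bm_car N) \<Longrightarrow>
   (\<And>x y. x \<in> bm_car M \<Longrightarrow> y \<in> bm_car M \<Longrightarrow> f (bm_plus M x y) = bm_plus N (f x) (f y)) \<Longrightarrow>
   additive M N f"
  unfolding additive_def by blast

lemma left_linearD: "left_linear M N f \<Longrightarrow> x \<in> bm_car M \<Longrightarrow> f (bm_lact M b x) = bm_lact N b (f x)"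
  unfolding left_linear_def by blast

lemma right_linearD: "right_linear M N f \<Longrightarrow> x \<in> bm_car M \<Longrightarrow> f (bm_ract M x a) = bm_ract N (f x) a"
  unfolding right_linear_def by blast

lemma additive_comp: "additive M N f \<Longrightarrow> additive N P g \<Longrightarrow> additive M P (\<lambda>x. g (f x))"
  unfolding additive_def by simp

lemma left_linear_comp:
  "additive M N f \<Longrightarrow> left_linear M N f \<Longrightarrow> left_linear N P g \<Longrightarrow> left_linear M P (\<lambda>x. g (f x))"
  unfolding additive_def left_linear_def by simp

lemma right_linear_comp:
  "additive M N f \<Longrightarrow> right_linear M N f \<Longrightarrow> right_linear N P g \<Longrightarrow> right_linear M P (\<lambda>x. g (f x))"
  unfolding additive_def right_linear_def by simp

lemma additive_id: "additive M M (\<lambda>x. x)"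
  and left_linear_id: "left_linear M M (\<lambda>x. x)"
  and right_linear_id: "right_linear M M (\<lambda>x. x)"
  unfolding additive_def left_linear_def right_linear_def by simp_all

lemma bimod_hom_iff: "bimod_hom M N f \<longleftrightarrow> additive M N f \<and> left_linear M N f \<and> right_linear M N f"
  unfolding bimod_hom_def additive_def left_linear_def right_linear_def by blast

lemma additive_zero: "abgroup M \<Longrightarrow> abgroup N \<Longrightarrow> additive M N f \<Longrightarrow> f (bm_zero M) = bm_zero N"
  by (metis additive_closed additive_add ag_idem_eq_zero ag_zero_closed ag_l_zero)

lemma additive_neg: "abgroup M \<Longrightarrow> abgroup N \<Longrightarrow> additive M N f \<Longrightarrow> x \<in> bm_car M \<Longrightarrow>
   f (bm_neg M x) = bm_neg N (f x)"
  by (rule ag_neg_unique) (auto simp: additive_closed additive_zero additive_add[symmetric])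

lemma additive_plus:
  assumes G: "abgroup P" and F: "additive M P F" and H: "additive M P H"
  shows "additive M P (\<lambda>u. bm_plus P (F u) (H u))"
proof (rule additiveI)
  fix x y assume "x \<in> bm_car M" "y \<in> bm_car M"
  then show "bm_plus P (F (bm_plus M x y)) (H (bm_plus M x y)) =
      bm_plus P (bm_plus P (F x) (H x)) (bm_plus P (F y) (H y))"
    by (simp add: additive_add[OF F] additive_add[OF H] ag_add_exchange[OF G]
        additive_closed[OF F] additive_closed[OF H])
qed (simp add: G additive_closed[OF F] additive_closed[OF H])

lemma msum_cong: "(\<And>q. q \<in> S \<Longrightarrow> h q = h' q) \<Longrightarrow> msum P h S = msum P h' S"
  unfolding msum_def by (rule fold_closed_eq[where B=UNIV]) auto

lemma msum_empty [simp]: "msum P h {} = bm_zero P"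
  unfolding msum_def by simp

context
  fixes P :: "('u, 'p, 'v) bimod"
  assumes G: "abgroup P"
begin

text \<open>The folding step of \<^const>\<open>msum\<close> only commutes on the carrier; the guarded step
  commutes everywhere and agrees with it along the fold.\<close>

definition guarded_add :: "('q \<Rightarrow> 'p) \<Rightarrow> 'q \<Rightarrow> 'p \<Rightarrow> 'p" where
  "guarded_add h q acc = (if acc \<in> bm_car P then bm_plus P (h q) acc else acc)"

lemma msum_eq_fold_guarded_add:
  "(\<And>q. q \<in> S \<Longrightarrow> h q \<in> bm_car P) \<Longrightarrow> msum P h S = Finite_Set.fold (guarded_add h) (bm_zero P) S"
  unfolding msum_def by (rule fold_closed_eq[where B="bm_car P"]) (auto simp: guarded_add_def G)

lemma comp_fun_commute_on_guarded_add:
  "(\<And>q. q \<in> S \<Longrightarrow> h q \<in> bm_car P) \<Longrightarrow> comp_fun_commute_on S (guarded_add h)"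
  unfolding comp_fun_commute_on_def by (auto simp: guarded_add_def fun_eq_iff G ag_add_left_comm)

lemma msum_closed:
  assumes "finite S" "\<And>q. q \<in> S \<Longrightarrow> h q \<in> bm_car P"
  shows "msum P h S \<in> bm_car P"
proof -
  interpret comp_fun_commute_on S "guarded_add h"
    by (rule comp_fun_commute_on_guarded_add) (use assms in auto)
  have "F \<subseteq> S \<Longrightarrow> Finite_Set.fold (guarded_add h) (bm_zero P) F \<in> bm_car P" for F
    using finite_subset[OF _ assms(1)]
    by (induction F rule: infinite_finite_induct) (auto simp: guarded_add_def G assms(2))
  then show ?thesis using assms by (simp add: msum_eq_fold_guarded_add)
qed

lemma msum_insert:
  assumes "finite S" "q \<notin> S" "h q \<in> bm_car P" "\<And>p. p \<in> S \<Longrightarrow> h p \<in> bm_car P"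
  shows "msum P h (insert q S) = bm_plus P (h q) (msum P h S)"
proof -
  have hc: "\<And>p. p \<in> insert q S \<Longrightarrow> h p \<in> bm_car P" using assms by auto
  interpret comp_fun_commute_on "insert q S" "guarded_add h"
    by (rule comp_fun_commute_on_guarded_add[OF hc])
  have "msum P h (insert q S) = Finite_Set.fold (guarded_add h) (bm_zero P) (insert q S)"
    by (rule msum_eq_fold_guarded_add[OF hc])
  also have "\<dots> = guarded_add h q (Finite_Set.fold (guarded_add h) (bm_zero P) S)"
    by (rule fold_insert) (use assms in auto)
  also have "Finite_Set.fold (guarded_add h) (bm_zero P) S = msum P h S"
    using assms by (simp add: msum_eq_fold_guarded_add)
  finally show ?thesis
    using msum_closed[OF assms(1,4)] by (simp add: guarded_add_def)
qed

lemma msum_add: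
  "finite S \<Longrightarrow> (\<And>p. p \<in> S \<Longrightarrow> h1 p \<in> bm_car P) \<Longrightarrow> (\<And>p. p \<in> S \<Longrightarrow> h2 p \<in> bm_car P) \<Longrightarrow>
   msum P (\<lambda>q. bm_plus P (h1 q) (h2 q)) S = bm_plus P (msum P h1 S) (msum P h2 S)"
  by (induction S rule: finite_induct) (simp_all add: msum_insert G msum_closed ag_add_exchange)

lemma msum_mono_neutral:
  assumes "finite S'" "S \<subseteq> S'" "\<And>q. q \<in> S' - S \<Longrightarrow> h q = bm_zero P"
    "\<And>q. q \<in> S \<Longrightarrow> h q \<in> bm_car P"
  shows "msum P h S' = msum P h S"
proof -
  have "msum P h (S \<union> R) = msum P h S" if "finite R" "R \<subseteq> S' - S" for R
    using that
  proof (induction R rule: finite_induct)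
    case (insert x R)
    have fin: "finite (S \<union> R)"
      using insert.hyps(1) finite_subset[OF assms(2,1)] by simp
    have x: "x \<notin> S \<union> R" and hx: "h x = bm_zero P"
      using insert.hyps(2) insert.prems assms(3) by blast+
    have hSR: "h p \<in> bm_car P" if "p \<in> S \<union> R" for p
      using that insert.prems assms(3,4) G by (cases "p \<in> S") auto
    have closed: "msum P h (S \<union> R) \<in> bm_car P"
      by (rule msum_closed[OF fin]) (rule hSR)
    have "msum P h (S \<union> insert x R) = bm_plus P (h x) (msum P h (S \<union> R))"
      using msum_insert[OF fin x] hx hSR G by simp
    also have "\<dots> = msum P h S"
      using hx closed insert.IH insert.prems G by simp
    finally show ?case .
  qed simp
  from this[of "S' - S"] have "msum P h (S \<union> (S' - S)) = msum P h S"
    using assms(1) by simp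
  moreover have "S \<union> (S' - S) = S'"
    using assms(2) by blast
  ultimately show ?thesis by simp
qed

lemma zmul_closed: "v \<in> bm_car P \<Longrightarrow> zmul P n v \<in> bm_car P"
proof -
  assume v: "v \<in> bm_car P"
  have "(bm_plus P v ^^ k) (bm_zero P) \<in> bm_car P" for k
    by (induction k) (simp_all add: G v)
  then show ?thesis by (simp add: zmul_def G)
qed

lemma zmul_zero [simp]: "zmul P 0 v = bm_zero P"
  by (simp add: zmul_def)

lemma zmul_one: "v \<in> bm_car P \<Longrightarrow> zmul P 1 v = v"
  by (simp add: zmul_def G)

lemma zmul_add_one:
  assumes v: "v \<in> bm_car P"
  shows "zmul P (n + 1) v = bm_plus P v (zmul P n v)"
proof -
  define it where "it k = (bm_plus P v ^^ k) (bm_zero P)" for k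
  have it_closed: "it k \<in> bm_car P" for k
    unfolding it_def by (induction k) (simp_all add: G v)
  have zmul_it: "zmul P m v = (if 0 \<le> m then it (nat m) else bm_neg P (it (nat (- m))))" for m
    by (simp add: zmul_def it_def)
  show ?thesis
  proof (cases "0 \<le> n")
    case True
    then show ?thesis by (simp add: zmul_it nat_add_distrib it_def)
  next
    case False
    define k where "k = nat (- n) - 1"
    have k: "nat (- n) = Suc k" "nat (- (n + 1)) = k"
      using False by (simp_all add: k_def)
    have "zmul P n v = bm_plus P (bm_neg P v) (bm_neg P (it k))"
      using False k by (simp add: zmul_it it_def ag_neg_add G v it_closed[unfolded it_def])
    moreover have "zmul P (n + 1) v = bm_neg P (it k)"
      using False k by (cases "n = -1") (simp_all add: zmul_it it_def G)
    ultimately show ?thesis using v by (simp add: G it_closed)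
  qed
qed

lemma zmul_diff_one: "v \<in> bm_car P \<Longrightarrow> zmul P (n - 1) v = bm_plus P (bm_neg P v) (zmul P n v)"
  using zmul_add_one[of v "n - 1"] by (simp add: G zmul_closed)

lemma zmul_add:
  assumes v: "v \<in> bm_car P"
  shows "zmul P (n + m) v = bm_plus P (zmul P n v) (zmul P m v)"
proof (induction m rule: int_induct[where k=0])
  case (step1 i)
  then show ?case
    using zmul_add_one[OF v, of "n + i"] zmul_add_one[OF v, of i]
      ag_add_left_comm[OF G, of v "zmul P n v" "zmul P i v"]
    by (simp add: add.assoc v zmul_closed)
next
  case (step2 i)
  then show ?case
    using zmul_diff_one[OF v, of "n + i"] zmul_diff_one[OF v, of i]
      ag_add_left_comm[OF G, of "bm_neg P v" "zmul P n v" "zmul P i v"]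
    by (simp add: add_diff_eq v zmul_closed G)
qed (simp add: G v zmul_closed)

end

context
  fixes M :: "('b::ring_1, 'm, 'a::ring_1) bimod"
  assumes B: "bimodule M"
begin

lemma bm_lact_closed: "x \<in> bm_car M \<Longrightarrow> bm_lact M b x \<in> bm_car M"
  and bm_ract_closed: "x \<in> bm_car M \<Longrightarrow> bm_ract M x a \<in> bm_car M"
  and bm_lact_plus: "x \<in> bm_car M \<Longrightarrow> y \<in> bm_car M \<Longrightarrow>
    bm_lact M b (bm_plus M x y) = bm_plus M (bm_lact M b x) (bm_lact M b y)"
  and bm_ract_plus: "x \<in> bm_car M \<Longrightarrow> y \<in> bm_car M \<Longrightarrow>
    bm_ract M (bm_plus M x y) a = bm_plus M (bm_ract M x a) (bm_ract M y a)"
  and bm_lact_one: "x \<in> bm_car M \<Longrightarrow> bm_lact M 1 x = x"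
  and bm_ract_one: "x \<in> bm_car M \<Longrightarrow> bm_ract M x 1 = x"
  and bm_lact_mult: "x \<in> bm_car M \<Longrightarrow> bm_lact M (b * b') x = bm_lact M b (bm_lact M b' x)"
  and bm_ract_mult: "x \<in> bm_car M \<Longrightarrow> bm_ract M x (a * a') = bm_ract M (bm_ract M x a) a'"
  and bm_lact_add: "x \<in> bm_car M \<Longrightarrow> bm_lact M (b + b') x = bm_plus M (bm_lact M b x) (bm_lact M b' x)"
  and bm_ract_add: "x \<in> bm_car M \<Longrightarrow> bm_ract M x (a + a') = bm_plus M (bm_ract M x a) (bm_ract M x a')"
  and bm_ract_lact: "x \<in> bm_car M \<Longrightarrow> bm_ract M (bm_lact M b x) a = bm_lact M b (bm_ract M x a)"
  using B unfolding bimodule_def by simp_all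

lemma bm_lact_additive: "additive M M (bm_lact M b)"
  and bm_ract_additive: "additive M M (\<lambda>m. bm_ract M m a)"
  by (simp_all add: additive_def bm_lact_closed bm_ract_closed bm_lact_plus bm_ract_plus)

lemma bm_lact_right_linear: "right_linear M M (bm_lact M b)"
  and bm_ract_left_linear: "left_linear M M (\<lambda>m. bm_ract M m a)"
  by (simp_all add: right_linear_def left_linear_def bm_ract_lact)

end

lemma bimoduleI:
  fixes M :: "('b::ring_1, 'm, 'a::ring_1) bimod"
  assumes "abgroup M"
    and "\<And>b x. x \<in> bm_car M \<Longrightarrow> bm_lact M b x \<in> bm_car M"
    and "\<And>a x. x \<in> bm_car M \<Longrightarrow> bm_ract M x a \<in> bm_car M"
    and "\<And>x. x \<in> bm_car M \<Longrightarrow> bm_lact M 1 x = x"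
    and "\<And>b b' x. x \<in> bm_car M \<Longrightarrow> bm_lact M (b * b') x = bm_lact M b (bm_lact M b' x)"
    and "\<And>b b' x. x \<in> bm_car M \<Longrightarrow> bm_lact M (b + b') x = bm_plus M (bm_lact M b x) (bm_lact M b' x)"
    and "\<And>b x y. x \<in> bm_car M \<Longrightarrow> y \<in> bm_car M \<Longrightarrow>
        bm_lact M b (bm_plus M x y) = bm_plus M (bm_lact M b x) (bm_lact M b y)"
    and "\<And>x. x \<in> bm_car M \<Longrightarrow> bm_ract M x 1 = x"
    and "\<And>a a' x. x \<in> bm_car M \<Longrightarrow> bm_ract M x (a * a') = bm_ract M (bm_ract M x a) a'"
    and "\<And>a a' x. x \<in> bm_car M \<Longrightarrow> bm_ract M x (a + a') = bm_plus M (bm_ract M x a) (bm_ract M x a')"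
    and "\<And>a x y. x \<in> bm_car M \<Longrightarrow> y \<in> bm_car M \<Longrightarrow>
        bm_ract M (bm_plus M x y) a = bm_plus M (bm_ract M x a) (bm_ract M y a)"
    and "\<And>a b x. x \<in> bm_car M \<Longrightarrow> bm_ract M (bm_lact M b x) a = bm_lact M b (bm_ract M x a)"
  shows "bimodule M"
  using assms(1) unfolding bimodule_def abgroup_def
  by (elim conjE, intro conjI ballI allI) (assumption | rule assms(2-12) | blast)+

lemma bimod_hom_restrict:
  assumes "bimodule M" "bimod_hom M N g"
  shows "bimod_hom M N (restrict g (bm_car M))"
  using assms unfolding bimod_hom_def
  by (simp add: bm_lact_closed bm_ract_closed ag_add_closed[OF bimodule_abgroup])

lemma ringmod_simps [simp]:
  "bm_car ringmod = UNIV" "bm_plus ringmod = (+)" "bm_lact ringmod = (*)"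
  "bm_ract ringmod = (*)" "bm_zero ringmod = 0" "bm_neg ringmod = uminus"
  by (simp_all add: ringmod_def)

definition eval_fsum :: "('u, 'p, 'v) bimod \<Rightarrow> ('q \<Rightarrow> 'p) \<Rightarrow> ('q \<Rightarrow> int) \<Rightarrow> 'p" where
  "eval_fsum P \<phi> x = msum P (\<lambda>q. zmul P (x q) (\<phi> q)) {q. x q \<noteq> 0}"

definition fsum_defined :: "('u, 'p, 'v) bimod \<Rightarrow> ('q \<Rightarrow> 'p) \<Rightarrow> ('q \<Rightarrow> int) \<Rightarrow> bool" where
  "fsum_defined P \<phi> x \<longleftrightarrow> finite {q. x q \<noteq> 0} \<and> (\<forall>q. x q \<noteq> 0 \<longrightarrow> \<phi> q \<in> bm_car P)"

lemma lift_eq_eval_fsum: "lift P \<phi> t = eval_fsum P \<phi> (rep t)"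
  by (simp add: lift_def eval_fsum_def)

lemma fsum_defined_add:
  assumes "fsum_defined P \<phi> x" "fsum_defined P \<phi> y"
  shows "fsum_defined P \<phi> (\<lambda>q. x q + y q)"
proof -
  have "{q. x q + y q \<noteq> 0} \<subseteq> {q. x q \<noteq> 0} \<union> {q. y q \<noteq> 0}" by auto
  then have "finite {q. x q + y q \<noteq> 0}"
    using assms unfolding fsum_defined_def by (auto intro: finite_subset)
  moreover have "\<phi> q \<in> bm_car P" if "x q + y q \<noteq> 0" for q
    using that assms unfolding fsum_defined_def by (cases "x q = 0") auto
  ultimately show ?thesis unfolding fsum_defined_def by blast
qed

lemma fsum_defined_neg: "fsum_defined P \<phi> x \<Longrightarrow> fsum_defined P \<phi> (\<lambda>q. - x q)"
  and fsum_defined_delta: "\<phi> p \<in> bm_car P \<Longrightarrow> fsum_defined P \<phi> (delta p)"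
  unfolding fsum_defined_def delta_def by auto

lemma fsum_defined_diff: "fsum_defined P \<phi> x \<Longrightarrow> fsum_defined P \<phi> y \<Longrightarrow> fsum_defined P \<phi> (\<lambda>q. x q - y q)"
  using fsum_defined_add[OF _ fsum_defined_neg] by simp

context
  fixes P :: "('u, 'p, 'v) bimod"
  assumes G: "abgroup P"
begin

lemma eval_fsum_superset:
  assumes "finite U" "{q. x q \<noteq> 0} \<subseteq> U" "\<And>q. q \<in> U \<Longrightarrow> \<phi> q \<in> bm_car P"
  shows "eval_fsum P \<phi> x = msum P (\<lambda>q. zmul P (x q) (\<phi> q)) U"
  unfolding eval_fsum_def
  by (rule msum_mono_neutral[OF G, symmetric]) (use assms in \<open>auto simp: zmul_closed[OF G] G\<close>)

lemma eval_fsum_closed: "fsum_defined P \<phi> x \<Longrightarrow> eval_fsum P \<phi> x \<in> bm_car P"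
  unfolding eval_fsum_def fsum_defined_def by (rule msum_closed[OF G]) (auto simp: zmul_closed[OF G])

lemma eval_fsum_zero: "eval_fsum P \<phi> (\<lambda>_. 0) = bm_zero P"
  by (simp add: eval_fsum_def)

lemma eval_fsum_delta: "\<phi> p \<in> bm_car P \<Longrightarrow> eval_fsum P \<phi> (delta p) = \<phi> p"
proof -
  assume "\<phi> p \<in> bm_car P"
  moreover have "{q. delta p q \<noteq> 0} = {p}" by (auto simp: delta_def)
  ultimately show ?thesis
    by (simp add: eval_fsum_def delta_def msum_insert[OF G] zmul_one[OF G] G)
qed

lemma eval_fsum_add:
  assumes "fsum_defined P \<phi> x" "fsum_defined P \<phi> y"
  shows "eval_fsum P \<phi> (\<lambda>q. x q + y q) = bm_plus P (eval_fsum P \<phi> x) (eval_fsum P \<phi> y)"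
proof -
  define U where "U = {q. x q \<noteq> 0} \<union> {q. y q \<noteq> 0}"
  have U: "finite U" "\<And>q. q \<in> U \<Longrightarrow> \<phi> q \<in> bm_car P"
    using assms unfolding U_def fsum_defined_def by auto
  have "eval_fsum P \<phi> (\<lambda>q. x q + y q) = msum P (\<lambda>q. zmul P (x q + y q) (\<phi> q)) U"
    by (rule eval_fsum_superset[OF U(1) _ U(2)]) (auto simp: U_def)
  also have "\<dots> = msum P (\<lambda>q. bm_plus P (zmul P (x q) (\<phi> q)) (zmul P (y q) (\<phi> q))) U"
    by (rule msum_cong) (simp add: zmul_add[OF G] U(2))
  also have "\<dots> = bm_plus P (msum P (\<lambda>q. zmul P (x q) (\<phi> q)) U) (msum P (\<lambda>q. zmul P (y q) (\<phi> q)) U)"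
    by (rule msum_add[OF G U(1)]) (simp_all add: zmul_closed[OF G] U(2))
  also have "\<dots> = bm_plus P (eval_fsum P \<phi> x) (eval_fsum P \<phi> y)"
    using eval_fsum_superset[OF U(1) _ U(2)] by (simp add: U_def)
  finally show ?thesis .
qed

lemma eval_fsum_neg:
  assumes "fsum_defined P \<phi> x"
  shows "eval_fsum P \<phi> (\<lambda>q. - x q) = bm_neg P (eval_fsum P \<phi> x)"
  using eval_fsum_add[OF fsum_defined_neg[OF assms] assms]
  by (intro ag_neg_unique[OF G]) (simp_all add: eval_fsum_closed assms fsum_defined_neg eval_fsum_zero)

lemma eval_fsum_diff:
  assumes "fsum_defined P \<phi> x" "fsum_defined P \<phi> y"
  shows "eval_fsum P \<phi> (\<lambda>q. x q - y q) = bm_plus P (eval_fsum P \<phi> x) (bm_neg P (eval_fsum P \<phi> y))"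
  using eval_fsum_add[OF assms(1) fsum_defined_neg[OF assms(2)]] eval_fsum_neg[OF assms(2)] by simp

end

definition balanced :: "('x, 'm, 'a) bimod \<Rightarrow> ('a, 'n, 'y) bimod \<Rightarrow> ('u, 'p, 'v) bimod
   \<Rightarrow> ('m \<times> 'n \<Rightarrow> 'p) \<Rightarrow> bool" where
  "balanced M N P \<phi> \<longleftrightarrow> (\<forall>m\<in>bm_car M. \<forall>n\<in>bm_car N. \<phi> (m, n) \<in> bm_car P)
    \<and> (\<forall>m\<in>bm_car M. \<forall>m'\<in>bm_car M. \<forall>n\<in>bm_car N.
         \<phi> (bm_plus M m m', n) = bm_plus P (\<phi> (m, n)) (\<phi> (m', n)))
    \<and> (\<forall>m\<in>bm_car M. \<forall>n\<in>bm_car N. \<forall>n'\<in>bm_car N.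
         \<phi> (m, bm_plus N n n') = bm_plus P (\<phi> (m, n)) (\<phi> (m, n')))
    \<and> (\<forall>a. \<forall>m\<in>bm_car M. \<forall>n\<in>bm_car N. \<phi> (bm_ract M m a, n) = \<phi> (m, bm_lact N a n))"

lemma balancedI:
  assumes "\<And>m n. m \<in> bm_car M \<Longrightarrow> n \<in> bm_car N \<Longrightarrow> f m n \<in> bm_car P"
    and "\<And>m m' n. m \<in> bm_car M \<Longrightarrow> m' \<in> bm_car M \<Longrightarrow> n \<in> bm_car N \<Longrightarrow>
         f (bm_plus M m m') n = bm_plus P (f m n) (f m' n)"
    and "\<And>m n n'. m \<in> bm_car M \<Longrightarrow> n \<in> bm_car N \<Longrightarrow> n' \<in> bm_car N \<Longrightarrow>
         f m (bm_plus N n n') = bm_plus P (f m n) (f m n')"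
    and "\<And>a m n. m \<in> bm_car M \<Longrightarrow> n \<in> bm_car N \<Longrightarrow> f (bm_ract M m a) n = f m (bm_lact N a n)"
  shows "balanced M N P (\<lambda>(m, n). f m n)"
  using assms unfolding balanced_def by simp

lemma balanced_closed: "balanced M N P \<phi> \<Longrightarrow> m \<in> bm_car M \<Longrightarrow> n \<in> bm_car N \<Longrightarrow> \<phi> (m, n) \<in> bm_car P"
  and balanced_add_left: "balanced M N P \<phi> \<Longrightarrow> m \<in> bm_car M \<Longrightarrow> m' \<in> bm_car M \<Longrightarrow> n \<in> bm_car N \<Longrightarrow>
    \<phi> (bm_plus M m m', n) = bm_plus P (\<phi> (m, n)) (\<phi> (m', n))"
  and balanced_add_right: "balanced M N P \<phi> \<Longrightarrow> m \<in> bm_car M \<Longrightarrow> n \<in> bm_car N \<Longrightarrow> n' \<in> bm_car N \<Longrightarrow>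
    \<phi> (m, bm_plus N n n') = bm_plus P (\<phi> (m, n)) (\<phi> (m, n'))"
  and balanced_ract_lact: "balanced M N P \<phi> \<Longrightarrow> m \<in> bm_car M \<Longrightarrow> n \<in> bm_car N \<Longrightarrow>
    \<phi> (bm_ract M m a, n) = \<phi> (m, bm_lact N a n)"
  unfolding balanced_def by blast+

lemma fsums_iff: "x \<in> fsums M N \<longleftrightarrow> finite {p. x p \<noteq> 0} \<and> {p. x p \<noteq> 0} \<subseteq> bm_car M \<times> bm_car N"
  by (simp add: fsums_def)

lemma fsums_add: "x \<in> fsums M N \<Longrightarrow> y \<in> fsums M N \<Longrightarrow> (\<lambda>q. x q + y q) \<in> fsums M N"
proof -
  assume "x \<in> fsums M N" "y \<in> fsums M N"
  moreover have "{q. x q + y q \<noteq> 0} \<subseteq> {q. x q \<noteq> 0} \<union> {q. y q \<noteq> 0}" by auto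
  ultimately show ?thesis unfolding fsums_iff by (auto intro: finite_subset)
qed

lemma fsums_neg: "x \<in> fsums M N \<Longrightarrow> (\<lambda>q. - x q) \<in> fsums M N"
  and fsums_zero: "(\<lambda>_. 0) \<in> fsums M N"
  and fsums_smult_delta: "m \<in> bm_car M \<Longrightarrow> n \<in> bm_car N \<Longrightarrow> (\<lambda>q. c * delta (m, n) q) \<in> fsums M N"
  and fsums_delta: "m \<in> bm_car M \<Longrightarrow> n \<in> bm_car N \<Longrightarrow> delta (m, n) \<in> fsums M N"
  unfolding fsums_iff delta_def by auto

lemma fsums_diff: "x \<in> fsums M N \<Longrightarrow> y \<in> fsums M N \<Longrightarrow> (\<lambda>q. x q - y q) \<in> fsums M N"
  using fsums_add[OF _ fsums_neg] by simp

lemma balanced_fsum_defined: "balanced M N P \<phi> \<Longrightarrow> x \<in> fsums M N \<Longrightarrow> fsum_defined P \<phi> x"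
  unfolding fsums_iff fsum_defined_def balanced_def by blast

lemma trel_fsums:
  assumes M: "bimodule M" and N: "bimodule N"
  shows "x \<in> trel M N \<Longrightarrow> x \<in> fsums M N"
  by (induction rule: trel.induct)
    (simp_all add: fsums_zero fsums_add fsums_neg fsums_diff fsums_delta bm_lact_closed[OF N]
      bm_ract_closed[OF M] ag_add_closed[OF bimodule_abgroup[OF M]] ag_add_closed[OF bimodule_abgroup[OF N]])

lemma eval_fsum_trel:
  assumes M: "bimodule M" and N: "bimodule N" and G: "abgroup P" and \<phi>: "balanced M N P \<phi>"
  shows "x \<in> trel M N \<Longrightarrow> eval_fsum P \<phi> x = bm_zero P"
proof (induction rule: trel.induct)
  note closed = balanced_closed[OF \<phi>]
  note evaluation = eval_fsum_diff[OF G] fsum_defined_diff fsum_defined_delta eval_fsum_delta[OF G]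
  have sum_minus_summands: "bm_plus P (bm_plus P (bm_plus P b c) (bm_neg P b)) (bm_neg P c) = bm_zero P"
    if "b \<in> bm_car P" "c \<in> bm_car P" for b c
    using that ag_add_comm[OF G, of "bm_plus P b c" "bm_neg P b"] by (simp add: G)
  {
    case zero
    show ?case by (rule eval_fsum_zero[OF G])
  next
    case (addl m m' n)
    then show ?case
      by (simp add: evaluation closed ag_add_closed[OF bimodule_abgroup[OF M]] balanced_add_left[OF \<phi>]
          sum_minus_summands G)
  next
    case (addr m n n')
    then show ?case
      by (simp add: evaluation closed ag_add_closed[OF bimodule_abgroup[OF N]] balanced_add_right[OF \<phi>]
          sum_minus_summands G)
  next
    case (bal m n a)
    then show ?case
      by (simp add: evaluation closed bm_ract_closed[OF M] bm_lact_closed[OF N] balanced_ract_lact[OF \<phi>] G)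
  next
    case (plus x y)
    then show ?case
      by (simp add: eval_fsum_add[OF G] balanced_fsum_defined[OF \<phi> trel_fsums[OF M N]] G)
  next
    case (neg x)
    then show ?case
      by (simp add: eval_fsum_neg[OF G] balanced_fsum_defined[OF \<phi> trel_fsums[OF M N]] G)
  }
qed

section \<open>The tensor product as an abelian group\<close>

lemma trel_neg_diff: "(\<lambda>q. x q - y q) \<in> trel M N \<Longrightarrow> (\<lambda>q. y q - x q) \<in> trel M N"
  using trel.neg[of "\<lambda>q. x q - y q" M N] by simp

lemma trel_add_diff: "(\<lambda>q. a q - b q) \<in> trel M N \<Longrightarrow> (\<lambda>q. c q - d q) \<in> trel M N \<Longrightarrow>
  (\<lambda>q. (a q + c q) - (b q + d q)) \<in> trel M N"
  using trel.plus[of "\<lambda>q. a q - b q" M N "\<lambda>q. c q - d q"] by (simp add: algebra_simps)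

lemma trel_diff_trans: "(\<lambda>q. a q - b q) \<in> trel M N \<Longrightarrow> (\<lambda>q. b q - c q) \<in> trel M N \<Longrightarrow>
  (\<lambda>q. a q - c q) \<in> trel M N"
  using trel.plus[of "\<lambda>q. a q - b q" M N "\<lambda>q. b q - c q"] by (simp add: algebra_simps)

lemma tcls_eq: "(\<lambda>q. x q - y q) \<in> trel M N \<Longrightarrow> tcls M N x = tcls M N y"
  unfolding tcls_def using trel_diff_trans[of x y M N] trel_diff_trans[of y x M N] trel_neg_diff by blast

lemma rep_tcls:
  assumes "x \<in> fsums M N"
  shows "rep (tcls M N x) \<in> fsums M N" "(\<lambda>q. x q - rep (tcls M N x) q) \<in> trel M N"
proof -
  have "x \<in> tcls M N x"
    unfolding tcls_def using assms trel.zero by simp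
  then have "rep (tcls M N x) \<in> tcls M N x"
    unfolding rep_def by (rule someI[of "\<lambda>y. y \<in> tcls M N x"])
  then show "rep (tcls M N x) \<in> fsums M N" "(\<lambda>q. x q - rep (tcls M N x) q) \<in> trel M N"
    unfolding tcls_def by auto
qed

lemma tens_carrier: "bm_car (tens M N) = tcls M N ` fsums M N"
  and tens_zero: "bm_zero (tens M N) = tcls M N (\<lambda>_. 0)"
  and tens_plus: "bm_plus (tens M N) t u = tcls M N (\<lambda>q. rep t q + rep u q)"
  and tens_neg: "bm_neg (tens M N) t = tcls M N (\<lambda>q. - rep t q)"
  by (simp_all add: tens_def)

lemma tcls_closed: "x \<in> fsums M N \<Longrightarrow> tcls M N x \<in> bm_car (tens M N)"
  by (simp add: tens_carrier)

lemma tens_carE: "u \<in> bm_car (tens M N) \<Longrightarrow> (\<And>x. x \<in> fsums M N \<Longrightarrow> u = tcls M N x \<Longrightarrow> R) \<Longrightarrow> R"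
  by (auto simp: tens_carrier)

lemma tcls_plus: "x \<in> fsums M N \<Longrightarrow> y \<in> fsums M N \<Longrightarrow>
  bm_plus (tens M N) (tcls M N x) (tcls M N y) = tcls M N (\<lambda>q. x q + y q)"
  unfolding tens_plus
  by (rule tcls_eq, rule trel_neg_diff, rule trel_add_diff) (simp_all add: rep_tcls)

lemma tcls_neg: "x \<in> fsums M N \<Longrightarrow> bm_neg (tens M N) (tcls M N x) = tcls M N (\<lambda>q. - x q)"
  unfolding tens_neg by (rule tcls_eq) (use rep_tcls(2)[of x M N] in simp)

lemma abgroup_tens: "abgroup (tens M N)"
  unfolding abgroup_def
proof (intro conjI ballI)
  show "bm_zero (tens M N) \<in> bm_car (tens M N)" by (simp add: tens_zero tcls_closed fsums_zero)
next
  fix u v assume "u \<in> bm_car (tens M N)" "v \<in> bm_car (tens M N)"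
  then show "bm_plus (tens M N) u v \<in> bm_car (tens M N)"
    by (auto elim!: tens_carE simp: tcls_plus tcls_closed fsums_add)
next
  fix u assume "u \<in> bm_car (tens M N)"
  then show "bm_neg (tens M N) u \<in> bm_car (tens M N)"
    by (auto elim!: tens_carE simp: tcls_neg tcls_closed fsums_neg)
next
  fix u v w assume "u \<in> bm_car (tens M N)" "v \<in> bm_car (tens M N)" "w \<in> bm_car (tens M N)"
  then show "bm_plus (tens M N) (bm_plus (tens M N) u v) w = bm_plus (tens M N) u (bm_plus (tens M N) v w)"
    by (auto elim!: tens_carE simp: tcls_plus fsums_add add.assoc)
next
  fix u v assume "u \<in> bm_car (tens M N)" "v \<in> bm_car (tens M N)"
  then show "bm_plus (tens M N) u v = bm_plus (tens M N) v u"
    by (auto elim!: tens_carE simp: tcls_plus add.commute)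
next
  fix u assume "u \<in> bm_car (tens M N)"
  then show "bm_plus (tens M N) (bm_zero (tens M N)) u = u"
    by (auto elim!: tens_carE simp: tcls_plus tens_zero fsums_zero)
next
  fix u assume "u \<in> bm_car (tens M N)"
  then show "bm_plus (tens M N) (bm_neg (tens M N) u) u = bm_zero (tens M N)"
    by (auto elim!: tens_carE simp: tcls_plus tcls_neg tens_zero fsums_neg)
qed

lemma lift_tcls:
  assumes M: "bimodule M" and N: "bimodule N" and G: "abgroup P" and \<phi>: "balanced M N P \<phi>"
    and x: "x \<in> fsums M N"
  shows "lift P \<phi> (tcls M N x) = eval_fsum P \<phi> x"
proof -
  define r where "r = rep (tcls M N x)"
  have r: "r \<in> fsums M N" "(\<lambda>q. x q - r q) \<in> trel M N"
    using rep_tcls[OF x] r_def by auto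
  note defined = balanced_fsum_defined[OF \<phi> x] balanced_fsum_defined[OF \<phi> r(1)]
  have "bm_plus P (eval_fsum P \<phi> x) (bm_neg P (eval_fsum P \<phi> r)) = bm_zero P"
    using eval_fsum_trel[OF M N G \<phi> r(2)] by (simp add: eval_fsum_diff[OF G defined])
  then have "eval_fsum P \<phi> x = eval_fsum P \<phi> r"
    by (rule ag_eq_if_diff_eq_zero[OF G eval_fsum_closed[OF G defined(1)] eval_fsum_closed[OF G defined(2)]])
  then show ?thesis by (simp add: lift_eq_eval_fsum r_def)
qed

lemma lift_tgrp: "lift (tgrp M N) \<phi> t = lift (tens M N) \<phi> t"
proof -
  have "bm_plus (tgrp M N) = bm_plus (tens M N)" "bm_zero (tgrp M N) = bm_zero (tens M N)"
    "bm_neg (tgrp M N) = bm_neg (tens M N)"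
    by (simp_all add: tgrp_def tens_def)
  note ops = this
  show ?thesis unfolding lift_def msum_def zmul_def ops ..
qed

lemma tel_closed: "m \<in> bm_car M \<Longrightarrow> n \<in> bm_car N \<Longrightarrow> tel M N m n \<in> bm_car (tens M N)"
  unfolding tel_def by (rule tcls_closed[OF fsums_delta])

lemma tel_add_left: "m \<in> bm_car M \<Longrightarrow> m' \<in> bm_car M \<Longrightarrow> n \<in> bm_car N \<Longrightarrow>
  tel M N (bm_plus M m m') n = bm_plus (tens M N) (tel M N m n) (tel M N m' n)"
  unfolding tel_def
  by (subst tcls_plus) (auto simp: fsums_delta algebra_simps intro!: tcls_eq dest: trel.addl[of _ M _ _ N])

lemma tel_add_right: "m \<in> bm_car M \<Longrightarrow> n \<in> bm_car N \<Longrightarrow> n' \<in> bm_car N \<Longrightarrow>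
  tel M N m (bm_plus N n n') = bm_plus (tens M N) (tel M N m n) (tel M N m n')"
  unfolding tel_def
  by (subst tcls_plus) (auto simp: fsums_delta algebra_simps intro!: tcls_eq dest: trel.addr[of _ M _ N])

lemma tel_ract_lact: "m \<in> bm_car M \<Longrightarrow> n \<in> bm_car N \<Longrightarrow>
  tel M N (bm_ract M m a) n = tel M N m (bm_lact N a n)"
  unfolding tel_def by (rule tcls_eq) (rule trel.bal)

lemma tens_induct_smult_tel:
  assumes mn: "m \<in> bm_car M" "n \<in> bm_car N"
    and zero: "Q (bm_zero (tens M N))"
    and tel: "Q (tel M N m n)"
    and plus: "\<And>u v. u \<in> bm_car (tens M N) \<Longrightarrow> v \<in> bm_car (tens M N) \<Longrightarrow> Q u \<Longrightarrow> Q v \<Longrightarrow>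
              Q (bm_plus (tens M N) u v)"
    and neg: "\<And>u. u \<in> bm_car (tens M N) \<Longrightarrow> Q u \<Longrightarrow> Q (bm_neg (tens M N) u)"
  shows "Q (tcls M N (\<lambda>q. c * delta (m, n) q))"
proof (induction c rule: int_induct[where k=0])
  case base
  show ?case using zero by (simp add: tens_zero)
next
  case (step1 i)
  have "tcls M N (\<lambda>q. (i + 1) * delta (m, n) q)
      = bm_plus (tens M N) (tcls M N (\<lambda>q. i * delta (m, n) q)) (tel M N m n)"
    unfolding tel_def by (simp add: tcls_plus fsums_smult_delta fsums_delta mn algebra_simps)
  then show ?case
    using plus[OF tcls_closed[OF fsums_smult_delta[OF mn]] tel_closed[OF mn] step1(2) tel] by simp
next
  case (step2 i)
  have "tcls M N (\<lambda>q. (i - 1) * delta (m, n) q)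
      = bm_plus (tens M N) (tcls M N (\<lambda>q. i * delta (m, n) q)) (bm_neg (tens M N) (tel M N m n))"
    unfolding tel_def
    by (simp add: tcls_neg tcls_plus fsums_smult_delta fsums_delta fsums_neg mn algebra_simps)
  then show ?case
    using plus[OF tcls_closed[OF fsums_smult_delta[OF mn]] _ step2(2) neg[OF tel_closed[OF mn] tel]]
      ag_neg_closed[OF abgroup_tens tel_closed[OF mn]] by simp
qed

lemma tens_induct:
  assumes u: "u \<in> bm_car (tens M N)"
    and zero: "Q (bm_zero (tens M N))"
    and tel: "\<And>m n. m \<in> bm_car M \<Longrightarrow> n \<in> bm_car N \<Longrightarrow> Q (tel M N m n)"
    and plus: "\<And>u v. u \<in> bm_car (tens M N) \<Longrightarrow> v \<in> bm_car (tens M N) \<Longrightarrow> Q u \<Longrightarrow> Q v \<Longrightarrow>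
              Q (bm_plus (tens M N) u v)"
    and neg: "\<And>u. u \<in> bm_car (tens M N) \<Longrightarrow> Q u \<Longrightarrow> Q (bm_neg (tens M N) u)"
  shows "Q u"
proof -
  have "Q (tcls M N x)" if "finite F" "x \<in> fsums M N" "{q. x q \<noteq> 0} = F" for F x
    using that
  proof (induction F arbitrary: x rule: finite_induct)
    case empty
    then have "x = (\<lambda>_. 0)" by auto
    then show ?case using zero by (simp add: tens_zero)
  next
    case (insert p F)
    obtain m n where p: "p = (m, n)" by (cases p)
    define x' where "x' = x(p := 0)"
    have mn: "m \<in> bm_car M" "n \<in> bm_car N"
      using insert.prems p unfolding fsums_iff by auto
    have support: "{q. x' q \<noteq> 0} = F"
      using insert.prems(2) insert.hyps(2) unfolding x'_def by auto
    have "{q. x' q \<noteq> 0} \<subseteq> {q. x q \<noteq> 0}"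
      unfolding x'_def by auto
    then have x': "x' \<in> fsums M N" "{q. x' q \<noteq> 0} = F"
      using insert.prems(1) insert.hyps(1) support unfolding fsums_iff by blast+
    have "x = (\<lambda>q. x' q + x p * delta (m, n) q)"
      by (auto simp: x'_def delta_def p)
    then have "tcls M N x = bm_plus (tens M N) (tcls M N x') (tcls M N (\<lambda>q. x p * delta (m, n) q))"
      by (simp add: tcls_plus x'(1) fsums_smult_delta[OF mn])
    then show ?case
      using plus[OF tcls_closed[OF x'(1)] tcls_closed[OF fsums_smult_delta[OF mn]]
          insert.IH[OF x'] tens_induct_smult_tel[OF mn zero tel[OF mn] plus neg]] by simp
  qed
  then show ?thesis
    using u by (auto simp: tens_carrier fsums_iff)
qed

lemma tens_ext:
  assumes G: "abgroup P" and F: "additive (tens M N) P F" and H: "additive (tens M N) P H"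
    and tel: "\<And>m n. m \<in> bm_car M \<Longrightarrow> n \<in> bm_car N \<Longrightarrow> F (tel M N m n) = H (tel M N m n)"
    and u: "u \<in> bm_car (tens M N)"
  shows "F u = H u"
proof (induction rule: tens_induct[OF u])
  case 1 show ?case by (simp add: additive_zero[OF abgroup_tens G F] additive_zero[OF abgroup_tens G H])
next
  case (2 m n) show ?case by (rule tel[OF 2])
next
  case (3 u v) then show ?case by (simp add: additive_add[OF F] additive_add[OF H])
next
  case (4 u) then show ?case by (simp add: additive_neg[OF abgroup_tens G F] additive_neg[OF abgroup_tens G H])
qed

lemma lift_cong:
  assumes u: "u \<in> bm_car (tens M N)"
    and e: "\<And>m n. m \<in> bm_car M \<Longrightarrow> n \<in> bm_car N \<Longrightarrow> \<phi> (m, n) = \<psi> (m, n)"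
  shows "lift P \<phi> u = lift P \<psi> u"
proof -
  have "rep u \<in> fsums M N"
    using u rep_tcls(1) by (auto simp: tens_carrier)
  then show ?thesis
    unfolding lift_eq_eval_fsum eval_fsum_def
    by (intro msum_cong) (auto simp: fsums_iff e)
qed

context
  fixes M :: "('x::ring_1, 'm, 'a::ring_1) bimod" and N :: "('a, 'n, 'y::ring_1) bimod"
  assumes M: "bimodule M" and N: "bimodule N"
begin

lemma lift_tel:
  assumes G: "abgroup P" and \<phi>: "balanced M N P \<phi>" and mn: "m \<in> bm_car M" "n \<in> bm_car N"
  shows "lift P \<phi> (tel M N m n) = \<phi> (m, n)"
  unfolding tel_def
  by (simp add: lift_tcls[OF M N G \<phi> fsums_delta[OF mn]] eval_fsum_delta[of P \<phi> "(m, n)", OF G balanced_closed[OF \<phi> mn]])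

lemma lift_additive:
  assumes G: "abgroup P" and \<phi>: "balanced M N P \<phi>"
  shows "additive (tens M N) P (lift P \<phi>)"
proof (rule additiveI)
  fix u assume "u \<in> bm_car (tens M N)"
  then show "lift P \<phi> u \<in> bm_car P"
    by (auto elim!: tens_carE simp: lift_tcls[OF M N G \<phi>] eval_fsum_closed[OF G balanced_fsum_defined[OF \<phi>]])
next
  fix u v assume "u \<in> bm_car (tens M N)" "v \<in> bm_car (tens M N)"
  then show "lift P \<phi> (bm_plus (tens M N) u v) = bm_plus P (lift P \<phi> u) (lift P \<phi> v)"
    by (auto elim!: tens_carE simp: tcls_plus lift_tcls[OF M N G \<phi>] fsums_add
        eval_fsum_add[OF G balanced_fsum_defined[OF \<phi>] balanced_fsum_defined[OF \<phi>]])
qed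

end

lemma tmap_cong:
  assumes "u \<in> bm_car (tens M N)" "\<And>m. m \<in> bm_car M \<Longrightarrow> f m = f' m" "\<And>n. n \<in> bm_car N \<Longrightarrow> g n = g' n"
  shows "tmap M' N' f g u = tmap M' N' f' g' u"
  unfolding tmap_def by (rule lift_cong[OF assms(1)]) (simp add: assms(2,3))

context
  fixes M :: "('x::ring_1, 'm, 'a::ring_1) bimod" and N :: "('a, 'n, 'y::ring_1) bimod"
    and M' :: "('x2::ring_1, 'm2, 'a) bimod" and N' :: "('a, 'n2, 'y2::ring_1) bimod"
    and f :: "'m \<Rightarrow> 'm2" and g :: "'n \<Rightarrow> 'n2"
  assumes M: "bimodule M" and N: "bimodule N"
    and f: "additive M M' f" "right_linear M M' f" and g: "additive N N' g" "left_linear N N' g"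
begin

lemma balanced_tmap: "balanced M N (tens M' N') (\<lambda>(m, n). tel M' N' (f m) (g n))"
  by (rule balancedI)
    (simp_all add: tel_closed tel_add_left tel_add_right tel_ract_lact additive_closed[OF f(1)]
      additive_closed[OF g(1)] additive_add[OF f(1)] additive_add[OF g(1)]
      right_linearD[OF f(2)] left_linearD[OF g(2)])

lemma tmap_tel: "m \<in> bm_car M \<Longrightarrow> n \<in> bm_car N \<Longrightarrow> tmap M' N' f g (tel M N m n) = tel M' N' (f m) (g n)"
  unfolding tmap_def by (simp add: lift_tel[OF M N abgroup_tens balanced_tmap])

lemma tmap_additive: "additive (tens M N) (tens M' N') (tmap M' N' f g)"
  unfolding tmap_def[abs_def] by (rule lift_additive[OF M N abgroup_tens balanced_tmap])

lemma tmap_closed: "u \<in> bm_car (tens M N) \<Longrightarrow> tmap M' N' f g u \<in> bm_car (tens M' N')"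
  by (rule additive_closed[OF tmap_additive])

end

context
  fixes M :: "('x::ring_1, 'm, 'a::ring_1) bimod" and N :: "('a, 'n, 'y::ring_1) bimod"
  assumes M: "bimodule M" and N: "bimodule N"
begin

lemma tens_lact_eq_tmap: "bm_lact (tens M N) b u = tmap M N (bm_lact M b) (\<lambda>n. n) u"
proof -
  have "bm_lact (tens M N) b u
      = lift (tgrp M N :: (unit, _, unit) bimod) (\<lambda>(m, n). tel M N (bm_lact M b m) n) u"
    unfolding tens_def by (simp only: bimod.select_convs)
  then show ?thesis by (simp only: lift_tgrp tmap_def)
qed

lemma tens_ract_eq_tmap: "bm_ract (tens M N) u a = tmap M N (\<lambda>m. m) (\<lambda>n. bm_ract N n a) u"
proof -
  have "bm_ract (tens M N) u a
      = lift (tgrp M N :: (unit, _, unit) bimod) (\<lambda>(m, n). tel M N m (bm_ract N n a)) u"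
    unfolding tens_def by (simp only: bimod.select_convs)
  then show ?thesis by (simp only: lift_tgrp tmap_def)
qed

lemmas tmap_lact = tmap_tel[OF M N bm_lact_additive[OF M] bm_lact_right_linear[OF M] additive_id left_linear_id]
lemmas tmap_ract = tmap_tel[OF M N additive_id right_linear_id bm_ract_additive[OF N] bm_ract_left_linear[OF N]]

lemma tens_lact_tel: "m \<in> bm_car M \<Longrightarrow> n \<in> bm_car N \<Longrightarrow>
  bm_lact (tens M N) b (tel M N m n) = tel M N (bm_lact M b m) n"
  by (simp add: tens_lact_eq_tmap tmap_lact)

lemma tens_ract_tel: "m \<in> bm_car M \<Longrightarrow> n \<in> bm_car N \<Longrightarrow>
  bm_ract (tens M N) (tel M N m n) a = tel M N m (bm_ract N n a)"
  by (simp add: tens_ract_eq_tmap tmap_ract)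

lemma tens_lact_additive: "additive (tens M N) (tens M N) (bm_lact (tens M N) b)"
  unfolding tens_lact_eq_tmap[abs_def]
  by (rule tmap_additive[OF M N bm_lact_additive[OF M] bm_lact_right_linear[OF M] additive_id left_linear_id])

lemma tens_ract_additive: "additive (tens M N) (tens M N) (\<lambda>u. bm_ract (tens M N) u a)"
  unfolding tens_ract_eq_tmap
  by (rule tmap_additive[OF M N additive_id right_linear_id bm_ract_additive[OF N] bm_ract_left_linear[OF N]])

lemma bimodule_tens: "bimodule (tens M N)"
proof (rule bimoduleI)
  note ext = tens_ext[OF abgroup_tens]
  note lact = tens_lact_additive and ract = tens_ract_additive
  show "abgroup (tens M N)" by (rule abgroup_tens)
  show "\<And>b x. x \<in> bm_car (tens M N) \<Longrightarrow> bm_lact (tens M N) b x \<in> bm_car (tens M N)"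
    "\<And>b x y. x \<in> bm_car (tens M N) \<Longrightarrow> y \<in> bm_car (tens M N) \<Longrightarrow>
        bm_lact (tens M N) b (bm_plus (tens M N) x y) =
        bm_plus (tens M N) (bm_lact (tens M N) b x) (bm_lact (tens M N) b y)"
    using additive_closed[OF lact] additive_add[OF lact] by blast+
  show "\<And>a x. x \<in> bm_car (tens M N) \<Longrightarrow> bm_ract (tens M N) x a \<in> bm_car (tens M N)"
    "\<And>a x y. x \<in> bm_car (tens M N) \<Longrightarrow> y \<in> bm_car (tens M N) \<Longrightarrow>
        bm_ract (tens M N) (bm_plus (tens M N) x y) a =
        bm_plus (tens M N) (bm_ract (tens M N) x a) (bm_ract (tens M N) y a)"
    using additive_closed[OF ract] additive_add[OF ract] by blast+
  show "\<And>x. x \<in> bm_car (tens M N) \<Longrightarrow> bm_lact (tens M N) 1 x = x"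
    by (rule ext[OF lact additive_id]) (simp add: tens_lact_tel bm_lact_one[OF M])
  show "\<And>b b' x. x \<in> bm_car (tens M N) \<Longrightarrow>
      bm_lact (tens M N) (b * b') x = bm_lact (tens M N) b (bm_lact (tens M N) b' x)"
    by (rule ext[OF lact additive_comp[OF lact lact]])
      (simp add: tens_lact_tel bm_lact_mult[OF M] bm_lact_closed[OF M])
  show "\<And>b b' x. x \<in> bm_car (tens M N) \<Longrightarrow> bm_lact (tens M N) (b + b') x =
      bm_plus (tens M N) (bm_lact (tens M N) b x) (bm_lact (tens M N) b' x)"
    by (rule ext[OF lact additive_plus[OF abgroup_tens lact lact]])
      (simp add: tens_lact_tel bm_lact_add[OF M] bm_lact_closed[OF M] tel_add_left)
  show "\<And>x. x \<in> bm_car (tens M N) \<Longrightarrow> bm_ract (tens M N) x 1 = x"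
    by (rule ext[OF ract additive_id]) (simp add: tens_ract_tel bm_ract_one[OF N])
  show "\<And>a a' x. x \<in> bm_car (tens M N) \<Longrightarrow>
      bm_ract (tens M N) x (a * a') = bm_ract (tens M N) (bm_ract (tens M N) x a) a'"
    by (rule ext[OF ract additive_comp[OF ract ract]])
      (simp add: tens_ract_tel bm_ract_mult[OF N] bm_ract_closed[OF N])
  show "\<And>a a' x. x \<in> bm_car (tens M N) \<Longrightarrow> bm_ract (tens M N) x (a + a') =
      bm_plus (tens M N) (bm_ract (tens M N) x a) (bm_ract (tens M N) x a')"
    by (rule ext[OF ract additive_plus[OF abgroup_tens ract ract]])
      (simp add: tens_ract_tel bm_ract_add[OF N] bm_ract_closed[OF N] tel_add_right)
  show "\<And>a b x. x \<in> bm_car (tens M N) \<Longrightarrow>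
      bm_ract (tens M N) (bm_lact (tens M N) b x) a = bm_lact (tens M N) b (bm_ract (tens M N) x a)"
    by (rule ext[OF additive_comp[OF lact ract] additive_comp[OF ract lact]])
      (simp add: tens_ract_tel tens_lact_tel bm_ract_closed[OF N] bm_lact_closed[OF M])
qed

lemma tel_additive_left: "n \<in> bm_car N \<Longrightarrow> additive M (tens M N) (\<lambda>m. tel M N m n)"
  and tel_additive_right: "m \<in> bm_car M \<Longrightarrow> additive N (tens M N) (\<lambda>n. tel M N m n)"
  by (simp_all add: additive_def tel_closed tel_add_left tel_add_right)

lemma tel_left_linear: "n \<in> bm_car N \<Longrightarrow> left_linear M (tens M N) (\<lambda>m. tel M N m n)"
  and tel_right_linear: "m \<in> bm_car M \<Longrightarrow> right_linear N (tens M N) (\<lambda>n. tel M N m n)"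
  by (simp_all add: left_linear_def right_linear_def tens_lact_tel tens_ract_tel)

end

lemma tmap_left_linear:
  fixes M :: "('x::ring_1, 'm, 'a::ring_1) bimod" and N :: "('a, 'n, 'y::ring_1) bimod"
    and M' :: "('x, 'm2, 'a) bimod" and N' :: "('a, 'n2, 'y2::ring_1) bimod"
  assumes M: "bimodule M" and N: "bimodule N" and M': "bimodule M'" and N': "bimodule N'"
    and f: "additive M M' f" "right_linear M M' f" "left_linear M M' f"
    and g: "additive N N' g" "left_linear N N' g"
  shows "left_linear (tens M N) (tens M' N') (tmap M' N' f g)"
  unfolding left_linear_def
proof (intro allI ballI)
  fix b u assume u: "u \<in> bm_car (tens M N)"
  note T = tmap_additive[OF M N f(1,2) g]
  show "tmap M' N' f g (bm_lact (tens M N) b u) = bm_lact (tens M' N') b (tmap M' N' f g u)"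
    by (rule tens_ext[OF abgroup_tens additive_comp[OF tens_lact_additive[OF M N] T]
          additive_comp[OF T tens_lact_additive[OF M' N']] _ u])
     (simp add: tens_lact_tel[OF M N] tmap_tel[OF M N f(1,2) g] bm_lact_closed[OF M]
        left_linearD[OF f(3)] tens_lact_tel[OF M' N'] additive_closed[OF f(1)] additive_closed[OF g(1)])
qed

lemma tmap_right_linear:
  fixes M :: "('x::ring_1, 'm, 'a::ring_1) bimod" and N :: "('a, 'n, 'y::ring_1) bimod"
    and M' :: "('x2::ring_1, 'm2, 'a) bimod" and N' :: "('a, 'n2, 'y) bimod"
  assumes M: "bimodule M" and N: "bimodule N" and M': "bimodule M'" and N': "bimodule N'"
    and f: "additive M M' f" "right_linear M M' f"
    and g: "additive N N' g" "left_linear N N' g" "right_linear N N' g"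
  shows "right_linear (tens M N) (tens M' N') (tmap M' N' f g)"
  unfolding right_linear_def
proof (intro allI ballI)
  fix a u assume u: "u \<in> bm_car (tens M N)"
  note T = tmap_additive[OF M N f g(1,2)]
  show "tmap M' N' f g (bm_ract (tens M N) u a) = bm_ract (tens M' N') (tmap M' N' f g u) a"
    by (rule tens_ext[OF abgroup_tens additive_comp[OF tens_ract_additive[OF M N] T]
          additive_comp[OF T tens_ract_additive[OF M' N']] _ u])
     (simp add: tens_ract_tel[OF M N] tmap_tel[OF M N f g(1,2)] bm_ract_closed[OF N]
        right_linearD[OF g(3)] tens_ract_tel[OF M' N'] additive_closed[OF f(1)] additive_closed[OF g(1)])
qed

lemma tmap_comp:
  fixes M :: "('x::ring_1, 'm, 'a::ring_1) bimod" and N :: "('a, 'n, 'y::ring_1) bimod"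
    and M' :: "('x2::ring_1, 'm2, 'a) bimod" and N' :: "('a, 'n2, 'y2::ring_1) bimod"
    and M'' :: "('x3::ring_1, 'm3, 'a) bimod" and N'' :: "('a, 'n3, 'y3::ring_1) bimod"
  assumes M: "bimodule M" and N: "bimodule N" and M': "bimodule M'" and N': "bimodule N'"
    and f: "additive M M' f" "right_linear M M' f" and g: "additive N N' g" "left_linear N N' g"
    and f2: "additive M' M'' f2" "right_linear M' M'' f2" and g2: "additive N' N'' g2" "left_linear N' N'' g2"
    and u: "u \<in> bm_car (tens M N)"
  shows "tmap M'' N'' f2 g2 (tmap M' N' f g u) = tmap M'' N'' (\<lambda>x. f2 (f x)) (\<lambda>x. g2 (g x)) u"
proof -
  have ff2: "additive M M'' (\<lambda>x. f2 (f x))" "right_linear M M'' (\<lambda>x. f2 (f x))"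
    by (rule additive_comp[OF f(1) f2(1)], rule right_linear_comp[OF f f2(2)])
  have gg2: "additive N N'' (\<lambda>x. g2 (g x))" "left_linear N N'' (\<lambda>x. g2 (g x))"
    by (rule additive_comp[OF g(1) g2(1)], rule left_linear_comp[OF g g2(2)])
  show ?thesis
    by (rule tens_ext[OF abgroup_tens additive_comp[OF tmap_additive[OF M N f g] tmap_additive[OF M' N' f2 g2]]
          tmap_additive[OF M N ff2 gg2] _ u])
      (simp add: tmap_tel[OF M N f g] tmap_tel[OF M' N' f2 g2] tmap_tel[OF M N ff2 gg2]
        additive_closed[OF f(1)] additive_closed[OF g(1)])
qed

section \<open>Associativity\<close>

lemma tens3_ext_left:
  fixes M :: "('x::ring_1, 'm, 'a::ring_1) bimod" and N :: "('a, 'n, 'b::ring_1) bimod"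
    and P :: "('b, 'p, 'y::ring_1) bimod"
  assumes M: "bimodule M" and N: "bimodule N" and P: "bimodule P" and G: "abgroup Q"
    and F: "additive (tens (tens M N) P) Q F" and H: "additive (tens (tens M N) P) Q H"
    and tel: "\<And>m n p. m \<in> bm_car M \<Longrightarrow> n \<in> bm_car N \<Longrightarrow> p \<in> bm_car P \<Longrightarrow>
        F (tel (tens M N) P (tel M N m n) p) = H (tel (tens M N) P (tel M N m n) p)"
    and u: "u \<in> bm_car (tens (tens M N) P)"
  shows "F u = H u"
proof (rule tens_ext[OF G F H _ u])
  fix w p assume w: "w \<in> bm_car (tens M N)" and p: "p \<in> bm_car P"
  note tel_p = tel_additive_left[OF bimodule_tens[OF M N] P p]
  show "F (tel (tens M N) P w p) = H (tel (tens M N) P w p)"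
    by (rule tens_ext[OF G additive_comp[OF tel_p F] additive_comp[OF tel_p H] _ w]) (rule tel[OF _ _ p])
qed

lemma tens3_ext_right:
  fixes M :: "('x::ring_1, 'm, 'a::ring_1) bimod" and N :: "('a, 'n, 'b::ring_1) bimod"
    and P :: "('b, 'p, 'y::ring_1) bimod"
  assumes M: "bimodule M" and N: "bimodule N" and P: "bimodule P" and G: "abgroup Q"
    and F: "additive (tens M (tens N P)) Q F" and H: "additive (tens M (tens N P)) Q H"
    and tel: "\<And>m n p. m \<in> bm_car M \<Longrightarrow> n \<in> bm_car N \<Longrightarrow> p \<in> bm_car P \<Longrightarrow>
        F (tel M (tens N P) m (tel N P n p)) = H (tel M (tens N P) m (tel N P n p))"
    and u: "u \<in> bm_car (tens M (tens N P))"
  shows "F u = H u"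
proof (rule tens_ext[OF G F H _ u])
  fix m w assume m: "m \<in> bm_car M" and w: "w \<in> bm_car (tens N P)"
  note tel_m = tel_additive_right[OF M bimodule_tens[OF N P] m]
  show "F (tel M (tens N P) m w) = H (tel M (tens N P) m w)"
    by (rule tens_ext[OF G additive_comp[OF tel_m F] additive_comp[OF tel_m H] _ w]) (rule tel[OF m])
qed

context
  fixes M :: "('x::ring_1, 'm, 'a::ring_1) bimod" and N :: "('a, 'n, 'b::ring_1) bimod"
    and P :: "('b, 'p, 'y::ring_1) bimod"
  assumes M: "bimodule M" and N: "bimodule N" and P: "bimodule P"
begin

lemmas MN = bimodule_tens[OF M N] and NP = bimodule_tens[OF N P]

text \<open>The associators are defined by iterated lifting; the inner lift is a tensor product of maps.\<close>

abbreviation assocR_inner :: "'p \<Rightarrow> ('m, 'n) tns \<Rightarrow> ('m, ('n, 'p) tns) tns" where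
  "assocR_inner p \<equiv> tmap M (tens N P) (\<lambda>m. m) (\<lambda>n. tel N P n p)"

abbreviation assocL_inner :: "'m \<Rightarrow> ('n, 'p) tns \<Rightarrow> (('m, 'n) tns, 'p) tns" where
  "assocL_inner m \<equiv> tmap (tens M N) P (\<lambda>n. tel M N m n) (\<lambda>p. p)"

lemma assocR_eq: "assocR M N P t = lift (tens M (tens N P)) (\<lambda>(u, p). assocR_inner p u) t"
  and assocL_eq: "assocL M N P t' = lift (tens (tens M N) P) (\<lambda>(m, v). assocL_inner m v) t'"
  unfolding assocR_def assocL_def tmap_def by simp_all

lemma assocR_inner_additive: "p \<in> bm_car P \<Longrightarrow> additive (tens M N) (tens M (tens N P)) (assocR_inner p)"
  and assocL_inner_additive: "m \<in> bm_car M \<Longrightarrow> additive (tens N P) (tens (tens M N) P) (assocL_inner m)"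
  by (rule tmap_additive[OF M N additive_id right_linear_id tel_additive_left[OF N P] tel_left_linear[OF N P]],
      assumption+)
    (rule tmap_additive[OF N P tel_additive_right[OF M N] tel_right_linear[OF M N] additive_id left_linear_id],
      assumption+)

lemma assocR_inner_tel: "m \<in> bm_car M \<Longrightarrow> n \<in> bm_car N \<Longrightarrow> p \<in> bm_car P \<Longrightarrow>
    assocR_inner p (tel M N m n) = tel M (tens N P) m (tel N P n p)"
  and assocL_inner_tel: "m \<in> bm_car M \<Longrightarrow> n \<in> bm_car N \<Longrightarrow> p \<in> bm_car P \<Longrightarrow>
    assocL_inner m (tel N P n p) = tel (tens M N) P (tel M N m n) p"
  by (simp_all add: tmap_tel[OF M N additive_id right_linear_id tel_additive_left[OF N P] tel_left_linear[OF N P]]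
      tmap_tel[OF N P tel_additive_right[OF M N] tel_right_linear[OF M N] additive_id left_linear_id])

lemma balanced_assocR: "balanced (tens M N) P (tens M (tens N P)) (\<lambda>(u, p). assocR_inner p u)"
proof (rule balancedI)
  fix u p p' assume u: "u \<in> bm_car (tens M N)" and p: "p \<in> bm_car P" "p' \<in> bm_car P"
  have pp: "bm_plus P p p' \<in> bm_car P" by (rule ag_add_closed[OF bimodule_abgroup[OF P] p])
  show "assocR_inner (bm_plus P p p') u = bm_plus (tens M (tens N P)) (assocR_inner p u) (assocR_inner p' u)"
    by (rule tens_ext[OF abgroup_tens assocR_inner_additive[OF pp]
          additive_plus[OF abgroup_tens assocR_inner_additive[OF p(1)] assocR_inner_additive[OF p(2)]] _ u])
      (simp add: assocR_inner_tel p pp tel_add_right tel_closed)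
next
  fix b u p assume u: "u \<in> bm_car (tens M N)" and p: "p \<in> bm_car P"
  have bp: "bm_lact P b p \<in> bm_car P" by (rule bm_lact_closed[OF P p])
  show "assocR_inner p (bm_ract (tens M N) u b) = assocR_inner (bm_lact P b p) u"
    by (rule tens_ext[OF abgroup_tens additive_comp[OF tens_ract_additive[OF M N] assocR_inner_additive[OF p]]
          assocR_inner_additive[OF bp] _ u])
      (simp add: assocR_inner_tel p bp tens_ract_tel[OF M N] bm_ract_closed[OF N] tel_ract_lact)
qed (simp_all add: additive_closed[OF assocR_inner_additive] additive_add[OF assocR_inner_additive])

lemma balanced_assocL: "balanced M (tens N P) (tens (tens M N) P) (\<lambda>(m, v). assocL_inner m v)"
proof (rule balancedI)
  fix m m' v assume m: "m \<in> bm_car M" "m' \<in> bm_car M" and v: "v \<in> bm_car (tens N P)"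
  have mm: "bm_plus M m m' \<in> bm_car M" by (rule ag_add_closed[OF bimodule_abgroup[OF M] m])
  show "assocL_inner (bm_plus M m m') v = bm_plus (tens (tens M N) P) (assocL_inner m v) (assocL_inner m' v)"
    by (rule tens_ext[OF abgroup_tens assocL_inner_additive[OF mm]
          additive_plus[OF abgroup_tens assocL_inner_additive[OF m(1)] assocL_inner_additive[OF m(2)]] _ v])
      (simp add: assocL_inner_tel m mm tel_add_left tel_closed)
next
  fix a m v assume m: "m \<in> bm_car M" and v: "v \<in> bm_car (tens N P)"
  have ma: "bm_ract M m a \<in> bm_car M" by (rule bm_ract_closed[OF M m])
  show "assocL_inner (bm_ract M m a) v = assocL_inner m (bm_lact (tens N P) a v)"
    by (rule tens_ext[OF abgroup_tens assocL_inner_additive[OF ma]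
          additive_comp[OF tens_lact_additive[OF N P] assocL_inner_additive[OF m]] _ v])
      (simp add: assocL_inner_tel m ma tens_lact_tel[OF N P] bm_lact_closed[OF N] tel_ract_lact)
qed (simp_all add: additive_closed[OF assocL_inner_additive] additive_add[OF assocL_inner_additive])

lemma assocR_additive: "additive (tens (tens M N) P) (tens M (tens N P)) (assocR M N P)"
  unfolding assocR_eq[abs_def] by (rule lift_additive[OF MN P abgroup_tens balanced_assocR])

lemma assocL_additive: "additive (tens M (tens N P)) (tens (tens M N) P) (assocL M N P)"
  unfolding assocL_eq[abs_def] by (rule lift_additive[OF M NP abgroup_tens balanced_assocL])

lemma assocL_closed: "v \<in> bm_car (tens M (tens N P)) \<Longrightarrow> assocL M N P v \<in> bm_car (tens (tens M N) P)"
  by (rule additive_closed[OF assocL_additive])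

lemma assocR_tel: "m \<in> bm_car M \<Longrightarrow> n \<in> bm_car N \<Longrightarrow> p \<in> bm_car P \<Longrightarrow>
    assocR M N P (tel (tens M N) P (tel M N m n) p) = tel M (tens N P) m (tel N P n p)"
  and assocL_tel: "m \<in> bm_car M \<Longrightarrow> n \<in> bm_car N \<Longrightarrow> p \<in> bm_car P \<Longrightarrow>
    assocL M N P (tel M (tens N P) m (tel N P n p)) = tel (tens M N) P (tel M N m n) p"
  by (simp_all add: assocR_eq assocL_eq lift_tel[OF MN P abgroup_tens balanced_assocR]
      lift_tel[OF M NP abgroup_tens balanced_assocL] tel_closed assocR_inner_tel assocL_inner_tel)

lemma assocR_tel_eq_tmap: "w \<in> bm_car (tens M N) \<Longrightarrow> p \<in> bm_car P \<Longrightarrow>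
  assocR M N P (tel (tens M N) P w p) = assocR_inner p w"
  by (simp add: assocR_eq lift_tel[OF MN P abgroup_tens balanced_assocR])

lemma assocR_left_linear: "left_linear (tens (tens M N) P) (tens M (tens N P)) (assocR M N P)"
  unfolding left_linear_def
proof (intro allI ballI)
  fix b u assume u: "u \<in> bm_car (tens (tens M N) P)"
  show "assocR M N P (bm_lact (tens (tens M N) P) b u) = bm_lact (tens M (tens N P)) b (assocR M N P u)"
    by (rule tens3_ext_left[OF M N P abgroup_tens
          additive_comp[OF tens_lact_additive[OF MN P] assocR_additive]
          additive_comp[OF assocR_additive tens_lact_additive[OF M NP]] _ u])
      (simp add: tens_lact_tel[OF MN P] tens_lact_tel[OF M N] tel_closed
         assocR_tel bm_lact_closed[OF M] tens_lact_tel[OF M NP])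
qed

lemma assocR_right_linear: "right_linear (tens (tens M N) P) (tens M (tens N P)) (assocR M N P)"
  unfolding right_linear_def
proof (intro allI ballI)
  fix a u assume u: "u \<in> bm_car (tens (tens M N) P)"
  show "assocR M N P (bm_ract (tens (tens M N) P) u a) = bm_ract (tens M (tens N P)) (assocR M N P u) a"
    by (rule tens3_ext_left[OF M N P abgroup_tens
          additive_comp[OF tens_ract_additive[OF MN P] assocR_additive]
          additive_comp[OF assocR_additive tens_ract_additive[OF M NP]] _ u])
      (simp add: tens_ract_tel[OF MN P] tens_ract_tel[OF N P] tel_closed
         assocR_tel bm_ract_closed[OF P] tens_ract_tel[OF M NP])
qed

lemma assocL_left_linear: "left_linear (tens M (tens N P)) (tens (tens M N) P) (assocL M N P)"
  unfolding left_linear_def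
proof (intro allI ballI)
  fix b u assume u: "u \<in> bm_car (tens M (tens N P))"
  show "assocL M N P (bm_lact (tens M (tens N P)) b u) = bm_lact (tens (tens M N) P) b (assocL M N P u)"
    by (rule tens3_ext_right[OF M N P abgroup_tens
          additive_comp[OF tens_lact_additive[OF M NP] assocL_additive]
          additive_comp[OF assocL_additive tens_lact_additive[OF MN P]] _ u])
      (simp add: tens_lact_tel[OF M NP] tens_lact_tel[OF M N] tel_closed
         assocL_tel bm_lact_closed[OF M] tens_lact_tel[OF MN P])
qed

end

lemma assocR_tmap_right:
  fixes M :: "('x::ring_1, 'm, 'a::ring_1) bimod" and N :: "('a, 'n, 'b::ring_1) bimod"
    and P :: "('b, 'p, 'y::ring_1) bimod" and P' :: "('b, 'p2, 'y2::ring_1) bimod"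
  assumes M: "bimodule M" and N: "bimodule N" and P: "bimodule P" and P': "bimodule P'"
    and h: "additive P P' h" "left_linear P P' h"
    and w: "w \<in> bm_car (tens (tens M N) P)"
  shows "assocR M N P' (tmap (tens M N) P' (\<lambda>x. x) h w)
       = tmap M (tens N P') (\<lambda>x. x) (tmap N P' (\<lambda>x. x) h) (assocR M N P w)"
proof -
  note MN = bimodule_tens[OF M N]
  note T1 = tmap_additive[OF MN P additive_id right_linear_id h]
  note T2a = tmap_additive[OF N P additive_id right_linear_id h]
  note T2l = tmap_left_linear[OF N P N P' additive_id right_linear_id left_linear_id h]
  note T2 = tmap_additive[OF M bimodule_tens[OF N P] additive_id right_linear_id T2a T2l]
  show ?thesis
    by (rule tens3_ext_left[OF M N P abgroup_tens additive_comp[OF T1 assocR_additive[OF M N P']]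
          additive_comp[OF assocR_additive[OF M N P] T2] _ w])
      (simp add: tmap_tel[OF MN P additive_id right_linear_id h] tel_closed additive_closed[OF h(1)]
        assocR_tel[OF M N P'] assocR_tel[OF M N P]
        tmap_tel[OF M bimodule_tens[OF N P] additive_id right_linear_id T2a T2l]
        tmap_tel[OF N P additive_id right_linear_id h])
qed

context
  fixes X :: "('u::ring_1, 'd, 'b::ring_1) bimod" and M :: "('b, 'm, 'a::ring_1) bimod"
    and e :: "'d \<Rightarrow> 'b"
  assumes X: "bimodule X" and M: "bimodule M" and e: "additive X ringmod e" "right_linear X ringmod e"
begin

lemma balanced_lact_by: "balanced X M M (\<lambda>(x, m). bm_lact M (e x) m)"
  using additive_add[OF e(1)] right_linearD[OF e(2)]
  by (intro balancedI) (simp_all add: bm_lact_closed[OF M] bm_lact_add[OF M] bm_lact_plus[OF M] bm_lact_mult[OF M])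

lemma lact_by_tel: "x \<in> bm_car X \<Longrightarrow> m \<in> bm_car M \<Longrightarrow> lact_by M e (tel X M x m) = bm_lact M (e x) m"
  unfolding lact_by_def by (simp add: lift_tel[OF X M bimodule_abgroup[OF M] balanced_lact_by])

lemma lact_by_additive: "additive (tens X M) M (lact_by M e)"
  unfolding lact_by_def[abs_def] by (rule lift_additive[OF X M bimodule_abgroup[OF M] balanced_lact_by])

lemma lact_by_right_linear: "right_linear (tens X M) M (lact_by M e)"
  unfolding right_linear_def
proof (intro allI ballI)
  fix a u assume u: "u \<in> bm_car (tens X M)"
  show "lact_by M e (bm_ract (tens X M) u a) = bm_ract M (lact_by M e u) a"
    by (rule tens_ext[OF bimodule_abgroup[OF M] additive_comp[OF tens_ract_additive[OF X M] lact_by_additive]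
          additive_comp[OF lact_by_additive bm_ract_additive[OF M]] _ u])
      (simp add: tens_ract_tel[OF X M] lact_by_tel bm_ract_closed[OF M] bm_ract_lact[OF M])
qed

end

lemma lact_by_left_linear:
  fixes X :: "('b::ring_1, 'd, 'b) bimod" and M :: "('b, 'm, 'a::ring_1) bimod"
  assumes X: "bimodule X" and M: "bimodule M"
    and e: "additive X ringmod e" "right_linear X ringmod e" "left_linear X ringmod e"
  shows "left_linear (tens X M) M (lact_by M e)"
  unfolding left_linear_def
proof (intro allI ballI)
  fix b u assume u: "u \<in> bm_car (tens X M)"
  note contract = lact_by_additive[OF X M e(1,2)]
  show "lact_by M e (bm_lact (tens X M) b u) = bm_lact M b (lact_by M e u)"
    by (rule tens_ext[OF bimodule_abgroup[OF M] additive_comp[OF tens_lact_additive[OF X M] contract]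
          additive_comp[OF contract bm_lact_additive[OF M]] _ u])
      (simp add: tens_lact_tel[OF X M] lact_by_tel[OF X M e(1,2)] bm_lact_closed[OF X]
        left_linearD[OF e(3)] bm_lact_mult[OF M])
qed

context
  fixes X :: "('a::ring_1, 'd, 'u::ring_1) bimod" and M :: "('b::ring_1, 'm, 'a) bimod"
    and e :: "'d \<Rightarrow> 'a"
  assumes X: "bimodule X" and M: "bimodule M" and e: "additive X ringmod e" "left_linear X ringmod e"
begin

lemma balanced_ract_by: "balanced M X M (\<lambda>(m, x). bm_ract M m (e x))"
  using additive_add[OF e(1)] left_linearD[OF e(2)]
  by (intro balancedI) (simp_all add: bm_ract_closed[OF M] bm_ract_add[OF M] bm_ract_plus[OF M] bm_ract_mult[OF M])

lemma ract_by_tel: "m \<in> bm_car M \<Longrightarrow> x \<in> bm_car X \<Longrightarrow> ract_by M e (tel M X m x) = bm_ract M m (e x)"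
  unfolding ract_by_def by (simp add: lift_tel[OF M X bimodule_abgroup[OF M] balanced_ract_by])

lemma ract_by_additive: "additive (tens M X) M (ract_by M e)"
  unfolding ract_by_def[abs_def] by (rule lift_additive[OF M X bimodule_abgroup[OF M] balanced_ract_by])

end

locale coring_on =
  fixes D :: "('b::ring_1, 'd, 'b) bimod" and \<Delta> :: "'d \<Rightarrow> ('d, 'd) tns" and \<epsilon> :: "'d \<Rightarrow> 'b"
  assumes D: "bimodule D" and comult_hom: "bimod_hom D (tens D D) \<Delta>" and counit_hom: "bimod_hom D ringmod \<epsilon>"
    and coassoc: "\<And>c. c \<in> bm_car D \<Longrightarrow>
      tmap D (tens D D) id \<Delta> (\<Delta> c) = assocR D D D (tmap (tens D D) D \<Delta> id (\<Delta> c))"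
    and lact_by_counit_comult: "\<And>c. c \<in> bm_car D \<Longrightarrow> lact_by D \<epsilon> (\<Delta> c) = c"
    and ract_by_counit_comult: "\<And>c. c \<in> bm_car D \<Longrightarrow> ract_by D \<epsilon> (\<Delta> c) = c"
begin

lemma comult_additive: "additive D (tens D D) \<Delta>"
  and comult_left_linear: "left_linear D (tens D D) \<Delta>"
  and comult_right_linear: "right_linear D (tens D D) \<Delta>"
  and counit_additive: "additive D ringmod \<epsilon>"
  and counit_left_linear: "left_linear D ringmod \<epsilon>"
  and counit_right_linear: "right_linear D ringmod \<epsilon>"
  using comult_hom counit_hom by (simp_all add: bimod_hom_iff)

lemmas DD = bimodule_tens[OF D D]
  and comult_closed = additive_closed[OF comult_additive]
  and counit = counit_additive counit_right_linear

lemma lact_by_natural: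
  fixes Y :: "('b, 'y, 'a::ring_1) bimod" and Z :: "('b, 'z, 'c::ring_1) bimod"
  assumes Y: "bimodule Y" and Z: "bimodule Z" and g: "additive Y Z g" "left_linear Y Z g"
    and v: "v \<in> bm_car (tens D Y)"
  shows "lact_by Z \<epsilon> (tmap D Z (\<lambda>x. x) g v) = g (lact_by Y \<epsilon> v)"
  by (rule tens_ext[OF bimodule_abgroup[OF Z]
        additive_comp[OF tmap_additive[OF D Y additive_id right_linear_id g] lact_by_additive[OF D Z counit]]
        additive_comp[OF lact_by_additive[OF D Y counit] g(1)] _ v])
    (simp add: tmap_tel[OF D Y additive_id right_linear_id g] lact_by_tel[OF D Z counit]
      lact_by_tel[OF D Y counit] additive_closed[OF g(1)] left_linearD[OF g(2)])

lemma tmap_lact_by_assocL: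
  fixes T :: "('b, 't, 'a::ring_1) bimod" and C :: "('a, 'c, 'y::ring_1) bimod"
  assumes T: "bimodule T" and C: "bimodule C" and v: "v \<in> bm_car (tens D (tens T C))"
  shows "tmap T C (lact_by T \<epsilon>) (\<lambda>x. x) (assocL D T C v) = lact_by (tens T C) \<epsilon> v"
proof -
  note contract = lact_by_additive[OF D T counit] lact_by_right_linear[OF D T counit]
  show ?thesis
    by (rule tens3_ext_right[OF D T C abgroup_tens
          additive_comp[OF assocL_additive[OF D T C] tmap_additive[OF bimodule_tens[OF D T] C contract
              additive_id left_linear_id]]
          lact_by_additive[OF D bimodule_tens[OF T C] counit] _ v])
      (simp add: assocL_tel[OF D T C] tmap_tel[OF bimodule_tens[OF D T] C contract additive_id left_linear_id]
        tel_closed lact_by_tel[OF D T counit] lact_by_tel[OF D bimodule_tens[OF T C] counit] tens_lact_tel[OF T C])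
qed

lemma coactL_eq: "coactL D \<Delta> X u = assocR D D X (tmap (tens D D) X \<Delta> (\<lambda>x. x) u)"
  by (simp add: coactL_def id_def)

context
  fixes X :: "('b, 'x, 'a::ring_1) bimod"
  assumes X: "bimodule X"
begin

lemmas DX = bimodule_tens[OF D X]
lemmas comult_tensX = tmap_additive[OF D X comult_additive comult_right_linear additive_id left_linear_id]

lemma coactL_additive: "additive (tens D X) (tens D (tens D X)) (coactL D \<Delta> X)"
  unfolding coactL_eq by (rule additive_comp[OF comult_tensX assocR_additive[OF D D X]])

lemma coactL_left_linear: "left_linear (tens D X) (tens D (tens D X)) (coactL D \<Delta> X)"
  unfolding coactL_eq
  by (rule left_linear_comp[OF comult_tensX tmap_left_linear[OF D X DD X comult_additive comult_right_linear
        comult_left_linear additive_id left_linear_id] assocR_left_linear[OF D D X]])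

lemma coactL_right_linear: "right_linear (tens D X) (tens D (tens D X)) (coactL D \<Delta> X)"
  unfolding coactL_eq
  by (rule right_linear_comp[OF comult_tensX tmap_right_linear[OF D X DD X comult_additive comult_right_linear
        additive_id left_linear_id right_linear_id] assocR_right_linear[OF D D X]])

lemma coactL_closed: "u \<in> bm_car (tens D X) \<Longrightarrow> coactL D \<Delta> X u \<in> bm_car (tens D (tens D X))"
  by (rule additive_closed[OF coactL_additive])

lemmas tel_left_factor = tel_additive_left[OF D X] tel_left_linear[OF D X]

lemma coactL_tel: "d \<in> bm_car D \<Longrightarrow> x \<in> bm_car X \<Longrightarrow>
  coactL D \<Delta> X (tel D X d x) = tmap D (tens D X) (\<lambda>m. m) (\<lambda>c. tel D X c x) (\<Delta> d)"
  by (simp add: coactL_eq tmap_tel[OF D X comult_additive comult_right_linear additive_id left_linear_id]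
      assocR_tel_eq_tmap[OF D D X] comult_closed)

lemma coactL_counit_left:
  assumes u: "u \<in> bm_car (tens D X)"
  shows "lact_by (tens D X) \<epsilon> (coactL D \<Delta> X u) = u"
  by (rule tens_ext[OF abgroup_tens additive_comp[OF coactL_additive lact_by_additive[OF D DX counit]]
        additive_id _ u])
    (simp add: coactL_tel lact_by_natural[OF D DX tel_left_factor] comult_closed lact_by_counit_comult)

lemma coactL_counit_right:
  assumes u: "u \<in> bm_car (tens D X)"
  shows "tmap D X (\<lambda>x. x) (lact_by X \<epsilon>) (coactL D \<Delta> X u) = u"
proof -
  note contract = lact_by_additive[OF D X counit] lact_by_left_linear[OF D X counit counit_left_linear]
  note contract_map = tmap_additive[OF D DX additive_id right_linear_id contract]
  have inner: "tmap D X (\<lambda>x. x) (\<lambda>c. lact_by X \<epsilon> (tel D X c x)) w = tel D X (ract_by D \<epsilon> w) x"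
    if w: "w \<in> bm_car (tens D D)" and x: "x \<in> bm_car X" for w x
  proof -
    have tel_contract: "additive D X (\<lambda>c. lact_by X \<epsilon> (tel D X c x))"
      "left_linear D X (\<lambda>c. lact_by X \<epsilon> (tel D X c x))"
      by (rule additive_comp[OF tel_left_factor(1)[OF x] contract(1)],
          rule left_linear_comp[OF tel_left_factor(1)[OF x] tel_left_factor(2)[OF x] contract(2)])
    show ?thesis
      by (rule tens_ext[OF abgroup_tens tmap_additive[OF D D additive_id right_linear_id tel_contract]
            additive_comp[OF ract_by_additive[OF D D counit_additive counit_left_linear] tel_left_factor(1)[OF x]] _ w])
        (simp add: x tmap_tel[OF D D additive_id right_linear_id tel_contract] lact_by_tel[OF D X counit]
          ract_by_tel[OF D D counit_additive counit_left_linear] tel_ract_lact)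
  qed
  show ?thesis
    by (rule tens_ext[OF abgroup_tens additive_comp[OF coactL_additive contract_map] additive_id _ u])
      (simp add: coactL_tel comult_closed ract_by_counit_comult inner
        tmap_comp[OF D D D DX additive_id right_linear_id tel_left_factor additive_id right_linear_id contract])
qed

end

lemma coactL_natural:
  fixes Y :: "('b, 'y, 'a::ring_1) bimod" and Z :: "('b, 'z, 'c::ring_1) bimod"
  assumes Y: "bimodule Y" and Z: "bimodule Z" and a: "additive Y Z a" "left_linear Y Z a"
    and y: "y \<in> bm_car (tens D Y)"
  shows "coactL D \<Delta> Z (tmap D Z (\<lambda>x. x) a y)
       = tmap D (tens D Z) (\<lambda>x. x) (tmap D Z (\<lambda>x. x) a) (coactL D \<Delta> Y y)"
proof -
  note comult = comult_additive comult_right_linear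
  have "tmap (tens D D) Z \<Delta> (\<lambda>x. x) (tmap D Z (\<lambda>x. x) a y)
      = tmap (tens D D) Z (\<lambda>x. x) a (tmap (tens D D) Y \<Delta> (\<lambda>x. x) y)"
    using tmap_comp[OF D Y D Z additive_id right_linear_id a comult additive_id left_linear_id y]
      tmap_comp[OF D Y DD Y comult additive_id left_linear_id additive_id right_linear_id a y]
    by simp
  then show ?thesis
    by (simp add: coactL_eq assocR_tmap_right[OF D D Y Z a]
        tmap_closed[OF D Y comult additive_id left_linear_id y])
qed

text \<open>Coassociativity of the left coaction: both sides send \<open>d \<otimes> x\<close> to
  \<open>(D \<otimes> (D \<otimes> (- \<otimes> x)))\<close> applied to the two equal sides of the coassociativity of \<open>\<Delta> d\<close>.\<close>

lemma coactL_coassoc: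
  fixes X :: "('b, 'x, 'a::ring_1) bimod"
  assumes X: "bimodule X" and u: "u \<in> bm_car (tens D X)"
  shows "coactL D \<Delta> (tens D X) (coactL D \<Delta> X u)
       = tmap D (tens D (tens D X)) (\<lambda>x. x) (coactL D \<Delta> X) (coactL D \<Delta> X u)"
proof -
  note DX = bimodule_tens[OF D X]
  note coactL = coactL_additive[OF X] coactL_left_linear[OF X]
  note comult = comult_additive comult_left_linear
  show ?thesis
  proof (rule tens_ext[OF abgroup_tens additive_comp[OF coactL(1) coactL_additive[OF DX]]
        additive_comp[OF coactL(1) tmap_additive[OF D DX additive_id right_linear_id coactL]] _ u])
    fix d x assume d: "d \<in> bm_car D" and x: "x \<in> bm_car X"
    note tel_left_factor = tel_additive_left[OF D X x] tel_left_linear[OF D X x]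
    note D_tel_x = tmap_additive[OF D D additive_id right_linear_id tel_left_factor]
      tmap_left_linear[OF D D D DX additive_id right_linear_id left_linear_id tel_left_factor]
    have coactL_tel_x: "coactL D \<Delta> X (tel D X c x) = tmap D (tens D X) (\<lambda>m. m) (\<lambda>c. tel D X c x) (\<Delta> c)"
      if "c \<in> bm_car D" for c
      by (rule coactL_tel[OF X that x])
    have "coactL D \<Delta> (tens D X) (coactL D \<Delta> X (tel D X d x))
        = tmap D (tens D (tens D X)) (\<lambda>m. m) (tmap D (tens D X) (\<lambda>m. m) (\<lambda>c. tel D X c x))
            (coactL D \<Delta> D (\<Delta> d))"
      by (simp add: coactL_tel_x d coactL_natural[OF D DX tel_left_factor comult_closed[OF d]])
    also have "coactL D \<Delta> D (\<Delta> d) = tmap D (tens D D) (\<lambda>m. m) \<Delta> (\<Delta> d)"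
      using coassoc[OF d] by (simp add: coactL_eq id_def)
    also have "tmap D (tens D (tens D X)) (\<lambda>m. m) (tmap D (tens D X) (\<lambda>m. m) (\<lambda>c. tel D X c x))
        (tmap D (tens D D) (\<lambda>m. m) \<Delta> (\<Delta> d))
      = tmap D (tens D (tens D X)) (\<lambda>m. m) (\<lambda>c. coactL D \<Delta> X (tel D X c x)) (\<Delta> d)"
      using tmap_comp[OF D D D DD additive_id right_linear_id comult additive_id right_linear_id D_tel_x
          comult_closed[OF d]]
      by (simp add: tmap_cong[OF comult_closed[OF d] _ coactL_tel_x])
    also have "\<dots> = tmap D (tens D (tens D X)) (\<lambda>m. m) (coactL D \<Delta> X) (coactL D \<Delta> X (tel D X d x))"
      using tmap_comp[OF D D D DX additive_id right_linear_id tel_left_factor additive_id right_linear_id coactL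
          comult_closed[OF d]]
      by (simp add: coactL_tel_x d)
    finally show "coactL D \<Delta> (tens D X) (coactL D \<Delta> X (tel D X d x))
        = tmap D (tens D (tens D X)) (\<lambda>x. x) (coactL D \<Delta> X) (coactL D \<Delta> X (tel D X d x))" .
  qed
qed

end

section \<open>2-cells and bicolinear maps\<close>

lemma (in coring_on) coactR_eq:
  "coactR D \<Delta> X C r x = assocL D X C (tmap D (tens X C) (\<lambda>x. x) r (coactL D \<Delta> X x))"
  by (simp add: coactR_def id_def)

locale cell_data = coring_on D \<Delta> \<epsilon>
  for D :: "('b::ring_1, 'd, 'b) bimod" and \<Delta> and \<epsilon> +
  fixes S :: "('b, 's, 'a::ring_1) bimod" and T :: "('b, 't, 'a) bimod" and C :: "('a, 'c, 'a) bimod"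
    and s :: "('d, 's) tns \<Rightarrow> ('s, 'c) tns" and t :: "('d, 't) tns \<Rightarrow> ('t, 'c) tns"
  assumes S: "bimodule S" and T: "bimodule T" and C: "bimodule C"
    and s: "bimod_hom (tens D S) (tens S C) s" and t: "bimod_hom (tens D T) (tens T C) t"
begin

lemmas DS = bimodule_tens[OF D S] and DT = bimodule_tens[OF D T]
  and SC = bimodule_tens[OF S C] and TC = bimodule_tens[OF T C]
lemmas DDS = bimodule_tens[OF D DS] and DSC = bimodule_tens[OF D SC]

lemma s_additive: "additive (tens D S) (tens S C) s" and s_left_linear: "left_linear (tens D S) (tens S C) s"
  and t_additive: "additive (tens D T) (tens T C) t" and t_left_linear: "left_linear (tens D T) (tens T C) t"
  using s t by (simp_all add: bimod_hom_iff)

definition Phi :: "(('d, 's) tns \<Rightarrow> 't) \<Rightarrow> ('d, 's) tns \<Rightarrow> ('d, 't) tns" where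
  "Phi a z = tmap D T (\<lambda>x. x) a (coactL D \<Delta> S z)"

definition a_assocL :: "(('d, 's) tns \<Rightarrow> 't) \<Rightarrow> ('d, ('s, 'c) tns) tns \<Rightarrow> ('t, 'c) tns" where
  "a_assocL a z = tmap T C a (\<lambda>x. x) (assocL D S C z)"

context
  fixes a :: "('d, 's) tns \<Rightarrow> 't"
  assumes a: "additive (tens D S) T a" "left_linear (tens D S) T a" "right_linear (tens D S) T a"
begin

lemma Da_additive: "additive (tens D (tens D S)) (tens D T) (tmap D T (\<lambda>x. x) a)"
  and Da_left_linear: "left_linear (tens D (tens D S)) (tens D T) (tmap D T (\<lambda>x. x) a)"
  and Da_right_linear: "right_linear (tens D (tens D S)) (tens D T) (tmap D T (\<lambda>x. x) a)"
    by (rule tmap_additive[OF D DS additive_id right_linear_id a(1,2)],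
        rule tmap_left_linear[OF D DS D T additive_id right_linear_id left_linear_id a(1,2)],
        rule tmap_right_linear[OF D DS D T additive_id right_linear_id a])

lemma Phi_additive: "additive (tens D S) (tens D T) (Phi a)"
  and Phi_left_linear: "left_linear (tens D S) (tens D T) (Phi a)"
  and Phi_right_linear: "right_linear (tens D S) (tens D T) (Phi a)"
  unfolding Phi_def[abs_def]
  by (rule additive_comp[OF coactL_additive[OF S] Da_additive],
      rule left_linear_comp[OF coactL_additive[OF S] coactL_left_linear[OF S] Da_left_linear],
      rule right_linear_comp[OF coactL_additive[OF S] coactL_right_linear[OF S] Da_right_linear])

lemma aC_additive: "additive (tens (tens D S) C) (tens T C) (tmap T C a (\<lambda>x. x))"
  and aC_left_linear: "left_linear (tens (tens D S) C) (tens T C) (tmap T C a (\<lambda>x. x))"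
  by (rule tmap_additive[OF DS C a(1,3) additive_id left_linear_id],
      rule tmap_left_linear[OF DS C T C a(1,3,2) additive_id left_linear_id])

lemma a_assocL_additive: "additive (tens D (tens S C)) (tens T C) (a_assocL a)"
  and a_assocL_left_linear: "left_linear (tens D (tens S C)) (tens T C) (a_assocL a)"
  unfolding a_assocL_def[abs_def]
  by (rule additive_comp[OF assocL_additive[OF D S C] aC_additive],
      rule left_linear_comp[OF assocL_additive[OF D S C] assocL_left_linear[OF D S C] aC_left_linear])

lemma tel_Da_tmap_tel:
  assumes w: "w \<in> bm_car (tens D D)" and \<sigma>: "\<sigma> \<in> bm_car S" and c: "c \<in> bm_car C"
  shows "tel (tens D T) C (tmap D T (\<lambda>x. x) a (tmap D (tens D S) (\<lambda>x. x) (\<lambda>d. tel D S d \<sigma>) w)) c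
    = assocL D T C (tmap D (tens T C) (\<lambda>x. x) (a_assocL a)
        (tmap D (tens D (tens S C)) (\<lambda>x. x) (\<lambda>d. tel D (tens S C) d (tel S C \<sigma> c)) w))"
proof -
  note tel_\<sigma> = tel_additive_left[OF D S \<sigma>] tel_left_linear[OF D S \<sigma>]
  note tel_\<sigma>c = tel_additive_left[OF D SC tel_closed[OF \<sigma> c]] tel_left_linear[OF D SC tel_closed[OF \<sigma> c]]
  note D_a_assocL = tmap_additive[OF D DSC additive_id right_linear_id a_assocL_additive a_assocL_left_linear]
  show ?thesis
    by (rule tens_ext[OF abgroup_tens
          additive_comp[OF additive_comp[OF tmap_additive[OF D D additive_id right_linear_id tel_\<sigma>] Da_additive]
            tel_additive_left[OF DT C c]]
          additive_comp[OF additive_comp[OF tmap_additive[OF D D additive_id right_linear_id tel_\<sigma>c] D_a_assocL]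
            assocL_additive[OF D T C]] _ w])
      (simp add: \<sigma> c tel_closed tmap_tel[OF D D additive_id right_linear_id tel_\<sigma>]
        tmap_tel[OF D D additive_id right_linear_id tel_\<sigma>c] tmap_tel[OF D DS additive_id right_linear_id a(1,2)]
        tmap_tel[OF D DSC additive_id right_linear_id a_assocL_additive a_assocL_left_linear]
        a_assocL_def assocL_tel[OF D S C] tmap_tel[OF DS C a(1,3) additive_id left_linear_id]
        additive_closed[OF a(1)] assocL_tel[OF D T C])
qed

lemma tmap_Phi_assocL:
  assumes v: "v \<in> bm_car (tens D (tens S C))"
  shows "tmap (tens D T) C (Phi a) (\<lambda>x. x) (assocL D S C v)
    = assocL D T C (tmap D (tens T C) (\<lambda>x. x) (a_assocL a)
        (assocR D D (tens S C) (tmap (tens D D) (tens S C) \<Delta> (\<lambda>x. x) v)))"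
  by (rule tens3_ext_right[OF D S C abgroup_tens
        additive_comp[OF assocL_additive[OF D S C] tmap_additive[OF DS C Phi_additive Phi_right_linear
            additive_id left_linear_id]]
        additive_comp[OF additive_comp[OF additive_comp[OF tmap_additive[OF D SC comult_additive
            comult_right_linear additive_id left_linear_id] assocR_additive[OF D D SC]]
            tmap_additive[OF D DSC additive_id right_linear_id a_assocL_additive a_assocL_left_linear]]
          assocL_additive[OF D T C]] _ v])
    (simp add: assocL_tel[OF D S C] tel_closed tmap_tel[OF DS C Phi_additive Phi_right_linear additive_id left_linear_id]
      Phi_def coactL_tel[OF S] tmap_tel[OF D SC comult_additive comult_right_linear additive_id left_linear_id]
      comult_closed assocR_tel_eq_tmap[OF D D SC] tel_Da_tmap_tel)

lemma Phi_left_colinear: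
  assumes x: "x \<in> bm_car (tens D S)"
  shows "coactL D \<Delta> T (Phi a x) = tmap D (tens D T) (\<lambda>x. x) (Phi a) (coactL D \<Delta> S x)"
proof -
  have Lx: "coactL D \<Delta> S x \<in> bm_car (tens D (tens D S))" by (rule coactL_closed[OF S x])
  have "coactL D \<Delta> T (Phi a x)
      = tmap D (tens D T) (\<lambda>x. x) (tmap D T (\<lambda>x. x) a) (coactL D \<Delta> (tens D S) (coactL D \<Delta> S x))"
    unfolding Phi_def by (rule coactL_natural[OF DS T a(1,2) Lx])
  also have "\<dots> = tmap D (tens D T) (\<lambda>x. x) (tmap D T (\<lambda>x. x) a)
      (tmap D (tens D (tens D S)) (\<lambda>x. x) (coactL D \<Delta> S) (coactL D \<Delta> S x))"
    by (simp add: coactL_coassoc[OF S x])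
  also have "\<dots> = tmap D (tens D T) (\<lambda>x. x) (Phi a) (coactL D \<Delta> S x)"
    using tmap_comp[OF D DS D DDS additive_id right_linear_id coactL_additive[OF S] coactL_left_linear[OF S]
        additive_id right_linear_id Da_additive Da_left_linear Lx]
    by (simp add: Phi_def[abs_def])
  finally show ?thesis .
qed

text \<open>Right colinearity of \<open>Phi a\<close> is split into two computations of the same term:
  \<open>tmap_Phi_coactR\<close> uses coassociativity, \<open>coactR_Phi\<close> the 2-cell condition.\<close>

lemma tmap_Phi_coactR:
  assumes x: "x \<in> bm_car (tens D S)"
  shows "tmap (tens D T) C (Phi a) (\<lambda>x. x) (coactR D \<Delta> S C s x)
    = assocL D T C (tmap D (tens T C) (\<lambda>x. x) (\<lambda>z. tmap T C a (\<lambda>x. x) (coactR D \<Delta> S C s z)) (coactL D \<Delta> S x))"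
proof -
  define y where "y = coactL D \<Delta> S x"
  have y: "y \<in> bm_car (tens D (tens D S))" unfolding y_def by (rule coactL_closed[OF S x])
  note s = s_additive s_left_linear
  note Ds = tmap_additive[OF D DS additive_id right_linear_id s] tmap_left_linear[OF D DS D SC additive_id
      right_linear_id left_linear_id s]
  note comult = comult_additive comult_right_linear
  have "tmap (tens D T) C (Phi a) (\<lambda>x. x) (coactR D \<Delta> S C s x)
      = assocL D T C (tmap D (tens T C) (\<lambda>x. x) (a_assocL a)
          (assocR D D (tens S C) (tmap (tens D D) (tens S C) \<Delta> (\<lambda>x. x) (tmap D (tens S C) (\<lambda>x. x) s y))))"
    by (simp add: coactR_eq y_def tmap_Phi_assocL tmap_closed[OF D DS additive_id right_linear_id s y[unfolded y_def]])
  also have "tmap (tens D D) (tens S C) \<Delta> (\<lambda>x. x) (tmap D (tens S C) (\<lambda>x. x) s y)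
      = tmap (tens D D) (tens S C) (\<lambda>x. x) s (tmap (tens D D) (tens D S) \<Delta> (\<lambda>x. x) y)"
    using tmap_comp[OF D DS D SC additive_id right_linear_id s comult additive_id left_linear_id y]
      tmap_comp[OF D DS DD DS comult additive_id left_linear_id additive_id right_linear_id s y]
    by simp
  also have "assocR D D (tens S C) \<dots> = tmap D (tens D (tens S C)) (\<lambda>x. x) (tmap D (tens S C) (\<lambda>x. x) s)
      (assocR D D (tens D S) (tmap (tens D D) (tens D S) \<Delta> (\<lambda>x. x) y))"
    by (rule assocR_tmap_right[OF D D DS SC s tmap_closed[OF D DS comult additive_id left_linear_id y]])
  also have "assocR D D (tens D S) (tmap (tens D D) (tens D S) \<Delta> (\<lambda>x. x) y)
      = tmap D (tens D (tens D S)) (\<lambda>x. x) (coactL D \<Delta> S) y"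
    unfolding coactL_eq[symmetric] y_def by (rule coactL_coassoc[OF S x])
  also have "tmap D (tens T C) (\<lambda>x. x) (a_assocL a) (tmap D (tens D (tens S C)) (\<lambda>x. x)
        (tmap D (tens S C) (\<lambda>x. x) s) (tmap D (tens D (tens D S)) (\<lambda>x. x) (coactL D \<Delta> S) y))
      = tmap D (tens T C) (\<lambda>x. x) (\<lambda>z. a_assocL a (tmap D (tens S C) (\<lambda>x. x) s (coactL D \<Delta> S z))) y"
    using tmap_comp[OF D DS D DDS additive_id right_linear_id coactL_additive[OF S] coactL_left_linear[OF S]
        additive_id right_linear_id Ds y]
      tmap_comp[OF D DS D DSC additive_id right_linear_id additive_comp[OF coactL_additive[OF S] Ds(1)]
        left_linear_comp[OF coactL_additive[OF S] coactL_left_linear[OF S] Ds(2)]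
        additive_id right_linear_id a_assocL_additive a_assocL_left_linear y]
    by simp
  finally show ?thesis
    by (simp add: a_assocL_def coactR_eq y_def)
qed

lemma coactR_Phi:
  assumes x: "x \<in> bm_car (tens D S)" and cell: "\<And>z. z \<in> bm_car (tens D S) \<Longrightarrow>
    tmap T C a (\<lambda>x. x) (coactR D \<Delta> S C s z) = t (tmap D T (\<lambda>x. x) a (coactL D \<Delta> S z))"
  shows "coactR D \<Delta> T C t (Phi a x)
    = assocL D T C (tmap D (tens T C) (\<lambda>x. x) (\<lambda>z. tmap T C a (\<lambda>x. x) (coactR D \<Delta> S C s z)) (coactL D \<Delta> S x))"
proof -
  have y: "coactL D \<Delta> S x \<in> bm_car (tens D (tens D S))" by (rule coactL_closed[OF S x])
  have "coactR D \<Delta> T C t (Phi a x)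
      = assocL D T C (tmap D (tens T C) (\<lambda>x. x) t (tmap D (tens D T) (\<lambda>x. x) (Phi a) (coactL D \<Delta> S x)))"
    by (simp add: coactR_eq Phi_left_colinear[OF x])
  also have "\<dots> = assocL D T C (tmap D (tens T C) (\<lambda>x. x) (\<lambda>z. t (Phi a z)) (coactL D \<Delta> S x))"
    using tmap_comp[OF D DS D DT additive_id right_linear_id Phi_additive Phi_left_linear additive_id
        right_linear_id t_additive t_left_linear y] by simp
  also have "\<dots> = assocL D T C (tmap D (tens T C) (\<lambda>x. x)
      (\<lambda>z. tmap T C a (\<lambda>x. x) (coactR D \<Delta> S C s z)) (coactL D \<Delta> S x))"
    by (rule arg_cong[where f="assocL D T C"], rule tmap_cong[OF y]) (simp_all add: Phi_def cell)
  finally show ?thesis .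
qed

end

lemma coactR_closed: "x \<in> bm_car (tens D S) \<Longrightarrow> coactR D \<Delta> S C s x \<in> bm_car (tens (tens D S) C)"
  unfolding coactR_eq
  by (rule assocL_closed[OF D S C tmap_closed[OF D DS additive_id right_linear_id s_additive s_left_linear
        coactL_closed[OF S]]])

lemma tmap_counit_coactR:
  "y \<in> bm_car (tens D T) \<Longrightarrow> tmap T C (lact_by T \<epsilon>) (\<lambda>x. x) (coactR D \<Delta> T C t y) = t y"
  unfolding coactR_eq
  by (simp add: tmap_lact_by_assocL[OF T C] tmap_closed[OF D DT additive_id right_linear_id t_additive t_left_linear]
      coactL_closed[OF T] lact_by_natural[OF DT TC t_additive t_left_linear] coactL_counit_left[OF T])

lemma cellPhi_eq: "x \<in> bm_car (tens D S) \<Longrightarrow> cellPhi D \<Delta> S T a x = Phi a x"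
  and cellPhi_eq_restrict: "cellPhi D \<Delta> S T a = restrict (Phi a) (bm_car (tens D S))"
  by (simp_all add: cellPhi_def Phi_def[abs_def] id_def)

lemma twocellsD:
  assumes "a \<in> twocells D \<Delta> C S s T t"
  shows "a \<in> extensional (bm_car (tens D S))"
    "additive (tens D S) T a" "left_linear (tens D S) T a" "right_linear (tens D S) T a"
    "\<And>x. x \<in> bm_car (tens D S) \<Longrightarrow>
       tmap T C a (\<lambda>x. x) (coactR D \<Delta> S C s x) = t (tmap D T (\<lambda>x. x) a (coactL D \<Delta> S x))"
  using assms unfolding twocells_def id_def bimod_hom_iff by auto

lemma bicolinD:
  assumes "f \<in> bicolin D \<Delta> C S s T t"
  shows "f \<in> extensional (bm_car (tens D S))" "additive (tens D S) (tens D T) f"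
    "left_linear (tens D S) (tens D T) f" "right_linear (tens D S) (tens D T) f"
    "\<And>x. x \<in> bm_car (tens D S) \<Longrightarrow>
       coactL D \<Delta> T (f x) = tmap D (tens D T) (\<lambda>x. x) f (coactL D \<Delta> S x)"
    "\<And>x. x \<in> bm_car (tens D S) \<Longrightarrow>
       coactR D \<Delta> T C t (f x) = tmap (tens D T) C f (\<lambda>x. x) (coactR D \<Delta> S C s x)"
  using assms unfolding bicolin_def id_def bimod_hom_iff by auto

lemma cellPhi_bicolin:
  assumes a: "a \<in> twocells D \<Delta> C S s T t"
  shows "cellPhi D \<Delta> S T a \<in> bicolin D \<Delta> C S s T t"
proof -
  note a' = twocellsD(2-4)[OF a] and cell = twocellsD(5)[OF a]
  have "bimod_hom (tens D S) (tens D T) (cellPhi D \<Delta> S T a)"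
    unfolding cellPhi_eq_restrict
    by (rule bimod_hom_restrict[OF DS]) (simp add: bimod_hom_iff Phi_additive[OF a'] Phi_left_linear[OF a']
        Phi_right_linear[OF a'])
  moreover have "tmap D (tens D T) (\<lambda>x. x) (cellPhi D \<Delta> S T a) (coactL D \<Delta> S x)
      = tmap D (tens D T) (\<lambda>x. x) (Phi a) (coactL D \<Delta> S x)"
    and "tmap (tens D T) C (cellPhi D \<Delta> S T a) (\<lambda>x. x) (coactR D \<Delta> S C s x)
      = tmap (tens D T) C (Phi a) (\<lambda>x. x) (coactR D \<Delta> S C s x)"
    if x: "x \<in> bm_car (tens D S)" for x
    by (rule tmap_cong[OF coactL_closed[OF S x]], simp_all add: cellPhi_eq)
      (rule tmap_cong[OF coactR_closed[OF x]], simp_all add: cellPhi_eq)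
  ultimately show ?thesis
    unfolding bicolin_def id_def
    by (simp add: cellPhi_eq Phi_left_colinear[OF a'] coactR_Phi[OF a' _ cell] tmap_Phi_coactR[OF a'])
      (simp add: cellPhi_def)
qed

lemma cellPsi_cellPhi:
  assumes a: "a \<in> twocells D \<Delta> C S s T t"
  shows "cellPsi D \<epsilon> S T (cellPhi D \<Delta> S T a) = a"
  unfolding cellPsi_def
proof (rule extensionalityI[OF restrict_extensional twocellsD(1)[OF a]])
  fix x assume x: "x \<in> bm_car (tens D S)"
  then show "restrict (\<lambda>x. lact_by T \<epsilon> (cellPhi D \<Delta> S T a x)) (bm_car (tens D S)) x = a x"
    by (simp add: cellPhi_eq Phi_def lact_by_natural[OF DS T twocellsD(2,3)[OF a]] coactL_closed[OF S]
        coactL_counit_left[OF S])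
qed

context
  fixes f assumes f: "f \<in> bicolin D \<Delta> C S s T t"
begin

lemmas f' = bicolinD(2-4)[OF f]
  and contract = lact_by_additive[OF D T counit] lact_by_left_linear[OF D T counit counit_left_linear]
    lact_by_right_linear[OF D T counit]

lemma cellPsi_eq: "x \<in> bm_car (tens D S) \<Longrightarrow> cellPsi D \<epsilon> S T f x = lact_by T \<epsilon> (f x)"
  by (simp add: cellPsi_def)

lemma Phi_cellPsi:
  assumes x: "x \<in> bm_car (tens D S)"
  shows "Phi (cellPsi D \<epsilon> S T f) x = f x"
proof -
  have Lx: "coactL D \<Delta> S x \<in> bm_car (tens D (tens D S))" by (rule coactL_closed[OF S x])
  have "Phi (cellPsi D \<epsilon> S T f) x = tmap D T (\<lambda>x. x) (\<lambda>y. lact_by T \<epsilon> (f y)) (coactL D \<Delta> S x)"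
    unfolding Phi_def by (rule tmap_cong[OF Lx]) (simp_all add: cellPsi_eq)
  also have "\<dots> = tmap D T (\<lambda>x. x) (lact_by T \<epsilon>) (tmap D (tens D T) (\<lambda>x. x) f (coactL D \<Delta> S x))"
    using tmap_comp[OF D DS D DT additive_id right_linear_id f'(1,2) additive_id right_linear_id contract(1,2) Lx]
    by simp
  also have "\<dots> = f x"
    by (simp add: bicolinD(5)[OF f x, symmetric] coactL_counit_right[OF T] additive_closed[OF f'(1) x])
  finally show ?thesis .
qed

lemma cellPhi_cellPsi: "cellPhi D \<Delta> S T (cellPsi D \<epsilon> S T f) = f"
  by (rule extensionalityI[OF _ bicolinD(1)[OF f]])
    (simp_all add: cellPhi_eq_restrict Phi_cellPsi)

lemma cellPsi_twocell: "cellPsi D \<epsilon> S T f \<in> twocells D \<Delta> C S s T t"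
proof -
  have "bimod_hom (tens D S) T (cellPsi D \<epsilon> S T f)"
    unfolding cellPsi_def
    by (rule bimod_hom_restrict[OF DS])
      (simp add: bimod_hom_iff additive_comp[OF f'(1) contract(1)] left_linear_comp[OF f'(1,2) contract(2)]
        right_linear_comp[OF f'(1,3) contract(3)])
  moreover have "tmap T C (cellPsi D \<epsilon> S T f) (\<lambda>x. x) (coactR D \<Delta> S C s x)
      = t (tmap D T (\<lambda>x. x) (cellPsi D \<epsilon> S T f) (coactL D \<Delta> S x))"
    if x: "x \<in> bm_car (tens D S)" for x
  proof -
    have Rx: "coactR D \<Delta> S C s x \<in> bm_car (tens (tens D S) C)" by (rule coactR_closed[OF x])
    have "tmap T C (cellPsi D \<epsilon> S T f) (\<lambda>x. x) (coactR D \<Delta> S C s x)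
        = tmap T C (\<lambda>y. lact_by T \<epsilon> (f y)) (\<lambda>x. x) (coactR D \<Delta> S C s x)"
      by (rule tmap_cong[OF Rx]) (simp_all add: cellPsi_eq)
    also have "\<dots> = tmap T C (lact_by T \<epsilon>) (\<lambda>x. x) (coactR D \<Delta> T C t (f x))"
      using tmap_comp[OF DS C DT C f'(1,3) additive_id left_linear_id contract(1,3) additive_id left_linear_id Rx]
      by (simp add: bicolinD(6)[OF f x])
    also have "\<dots> = t (f x)" by (rule tmap_counit_coactR[OF additive_closed[OF f'(1) x]])
    also have "f x = tmap D T (\<lambda>x. x) (cellPsi D \<epsilon> S T f) (coactL D \<Delta> S x)"
      using Phi_cellPsi[OF x] by (simp add: Phi_def)
    finally show ?thesis .
  qed
  ultimately show ?thesis
    unfolding twocells_def id_def by (simp add: cellPsi_def)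
qed

end

end

lemma coring_bimodule: "coring \<iota> C \<Delta> \<epsilon> \<Longrightarrow> bimodule C"
  and kbimod_bimodule: "kbimod \<iota>B \<iota>A S \<Longrightarrow> bimodule S"
  and onecell_bimod_hom: "onecell D \<Delta>D \<epsilon>D C \<Delta>C \<epsilon>C S s \<Longrightarrow> bimod_hom (tens D S) (tens S C) s"
  unfolding coring_def kbimod_def onecell_def by simp_all

lemma coring_on_if_coring: "coring \<iota> D \<Delta> \<epsilon> \<Longrightarrow> coring_on D \<Delta> \<epsilon>"
  unfolding coring_on_def coring_def kbimod_def by simp

theorem proposition2p2:
  fixes \<iota>A :: "'k::comm_ring_1 \<Rightarrow> 'a::ring_1" and \<iota>B :: "'k \<Rightarrow> 'b::ring_1"
    and C :: "('a, 'c, 'a) bimod" and \<Delta>C :: "'c \<Rightarrow> ('c, 'c) tns" and \<epsilon>C :: "'c \<Rightarrow> 'a"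
    and D :: "('b, 'd, 'b) bimod" and \<Delta>D :: "'d \<Rightarrow> ('d, 'd) tns" and \<epsilon>D :: "'d \<Rightarrow> 'b"
    and S :: "('b, 's, 'a) bimod" and s :: "('d, 's) tns \<Rightarrow> ('s, 'c) tns"
    and T :: "('b, 't, 'a) bimod" and t :: "('d, 't) tns \<Rightarrow> ('t, 'c) tns"
  assumes "kalgebra \<iota>A" and "kalgebra \<iota>B"
    and "coring \<iota>A C \<Delta>C \<epsilon>C" and "coring \<iota>B D \<Delta>D \<epsilon>D"
    and "kbimod \<iota>B \<iota>A S" and "kbimod \<iota>B \<iota>A T"
    and "onecell D \<Delta>D \<epsilon>D C \<Delta>C \<epsilon>C S s"
    and "onecell D \<Delta>D \<epsilon>D C \<Delta>C \<epsilon>C T t"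
  shows "bij_betw (cellPhi D \<Delta>D S T) (twocells D \<Delta>D C S s T t) (bicolin D \<Delta>D C S s T t)
    \<and> (\<forall>f\<in>bicolin D \<Delta>D C S s T t.
          cellPsi D \<epsilon>D S T f \<in> twocells D \<Delta>D C S s T t
        \<and> cellPhi D \<Delta>D S T (cellPsi D \<epsilon>D S T f) = f)"
proof -
  interpret cell_data D \<Delta>D \<epsilon>D S T C s t
    using assms(3-8)
    by (intro cell_data.intro cell_data_axioms.intro coring_on_if_coring coring_bimodule kbimod_bimodule
        onecell_bimod_hom)
  have "bij_betw (cellPhi D \<Delta>D S T) (twocells D \<Delta>D C S s T t) (bicolin D \<Delta>D C S s T t)"
    by (rule bij_betw_byWitness[where f'="cellPsi D \<epsilon>D S T"])
      (auto simp: cellPsi_cellPhi cellPhi_cellPsi cellPhi_bicolin cellPsi_twocell)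
  then show ?thesis
    by (simp add: cellPhi_cellPsi cellPsi_twocell)
qed

end
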